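(* (i) For all integers $n,m\geq 2$, $t(nm)\geq n\,t(m)+t(n)$. (ii) For all primes $p,q\geq 3$, $t(pq)\geq pq-5$, and moreover $t(pq)\geq pq-3$ if $q-1$ divides $p-1$.
   Context: For a positive integer $n$ let $S(\mathbb{Z}_n)$ be the set of bijections $\mathbb{Z}_n\to\mathbb{Z}_n$. For $\pi\in S(\mathbb{Z}_n)$, $\mathrm{cyc}(\pi)$ is the number of cycles (including fixed points) of $\pi$ and $t(\pi)=n-\mathrm{cyc}(\pi)$. Let $[\pi]=\{x\mapsto \pi(x+b): b\in\mathbb{Z}_n\}$, $t([\pi])=\min_{\sigma\in[\pi]}t(\sigma)$, and $t(n)=\max_{\pi\in S(\mathbb{Z}_n)}t([\pi])$. *)

theory Defs
  imports "HOL-Combinatorics.Permutations" "HOL-Computational_Algebra.Primes"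
begin

text \<open>Z_n is modelled as {0..<n} with arithmetic mod n; a bijection Z_n -> Z_n is a
  function that permutes {..<n} (identity outside).\<close>

definition cyc :: "nat \<Rightarrow> (nat \<Rightarrow> nat) \<Rightarrow> nat" where
  "cyc n \<sigma> = card ((\<lambda>x. {(\<sigma> ^^ k) x | k. True}) ` {..<n})"

definition tperm :: "nat \<Rightarrow> (nat \<Rightarrow> nat) \<Rightarrow> nat" where
  "tperm n \<sigma> = n - cyc n \<sigma>"

definition shiftp :: "nat \<Rightarrow> (nat \<Rightarrow> nat) \<Rightarrow> nat \<Rightarrow> (nat \<Rightarrow> nat)" where
  "shiftp n \<pi> b = (\<lambda>x. if x < n then \<pi> ((x + b) mod n) else x)"

definition tclass :: "nat \<Rightarrow> (nat \<Rightarrow> nat) \<Rightarrow> nat" where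
  "tclass n \<pi> = Min {tperm n (shiftp n \<pi> b) | b. b < n}"

definition tmax :: "nat \<Rightarrow> nat" where
  "tmax n = Max {tclass n \<pi> | \<pi>. \<pi> permutes {..<n}}"

end

theory Submission
  imports Defs "HOL-Number_Theory.Number_Theory" "HOL-Combinatorics.Orbits"
begin

text \<open>
  A permutation \<open>\<pi>\<close> of \<open>\<int>\<^sub>N\<close> shows \<open>t(N) \<ge> N - K\<close> as soon as every shift \<open>x \<mapsto> \<pi>(x + b)\<close> has at
  most \<open>K\<close> cycles, and cycles are counted from above by sets meeting every orbit.

  (i) From optimal \<open>\<pi>m\<close> and \<open>\<pi>n\<close>, let the permutation of \<open>\<int>\<^sub>n\<^sub>m\<close> act by \<open>\<pi>m\<close> on the low digit of
  \<open>x = j + m i\<close> and by \<open>\<pi>n\<close> on the high digit whenever the low digit becomes \<open>0\<close>. A cycle of a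
  shift either lies over a cycle of the shifted \<open>\<pi>m\<close> avoiding \<open>0\<close> (at most \<open>n\<close> of them per such
  cycle), or meets the column \<open>m i\<close>, whose return map is a shift of \<open>\<pi>n\<close>.

  (ii) For \<open>p = q\<close>, multiplication by a primitive root modulo \<open>p\<^sup>2\<close> has shifts with at most 3
  cycles. For \<open>p \<noteq> q\<close>, take the skew product \<open>(j, y) \<mapsto> (a j, mm(j) y + tt(j))\<close> on
  \<open>\<int>\<^sub>p \<times> \<int>\<^sub>q\<close> with \<open>a\<close> a primitive root modulo \<open>p\<close>. A shifted base map fixes one point and
  cycles through the other \<open>p - 1\<close>, so the cycles of a shift are counted by two affine maps of
  \<open>\<int>\<^sub>q\<close>: the fibre map over the fixed point and the composite of the \<open>p - 1\<close> fibre maps around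
  the long cycle. An affine map \<open>y \<mapsto> g\<^sup>e y + d\<close> with \<open>g\<close> a primitive root and \<open>g\<^sup>e \<noteq> 1\<close> has at
  most \<open>e + 1\<close> cycles, a translation by a unit has one. Multipliers \<open>g\<close> and \<open>g\<^sup>2\<close> with exponents
  summing to \<open>3\<close> modulo \<open>q - 1\<close> give at most 5 cycles; when \<open>q - 1\<close> divides \<open>p - 1\<close>, a
  multiplicative character as translation part makes the composite a nonzero translation and
  gives 3.
\<close>

definition meets_orbits :: "('a \<Rightarrow> 'a) \<Rightarrow> 'a set \<Rightarrow> 'a set \<Rightarrow> bool" where
  "meets_orbits f A R \<longleftrightarrow> (\<forall>x\<in>A. \<exists>k. (f ^^ k) x \<in> R)"

lemma meets_orbits_refl: "meets_orbits f A A"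
  unfolding meets_orbits_def by (intro ballI exI[of _ 0]) simp

lemma meets_orbits_trans:
  assumes "meets_orbits f A B" "meets_orbits f B C"
  shows "meets_orbits f A C"
  unfolding meets_orbits_def
proof
  fix x assume "x \<in> A"
  then obtain k where "(f ^^ k) x \<in> B" using assms(1) unfolding meets_orbits_def by blast
  then obtain j where "(f ^^ j) ((f ^^ k) x) \<in> C" using assms(2) unfolding meets_orbits_def by blast
  then have "(f ^^ (j + k)) x \<in> C" by (simp add: funpow_add)
  then show "\<exists>k. (f ^^ k) x \<in> C" ..
qed

lemma meets_orbits_funpowD:
  assumes "meets_orbits (f ^^ L) A R"
  shows "meets_orbits f A R"
  using assms unfolding meets_orbits_def funpow_mult by blast

lemma meets_orbits_UN:
  assumes "meets_orbits f A (\<Union>i\<in>I. B i)" "\<And>i. i \<in> I \<Longrightarrow> meets_orbits f (B i) (C i)"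
  shows "meets_orbits f A (\<Union>i\<in>I. C i)"
proof (rule meets_orbits_trans[OF assms(1)])
  show "meets_orbits f (\<Union>i\<in>I. B i) (\<Union>i\<in>I. C i)"
    using assms(2) unfolding meets_orbits_def by blast
qed

lemma meets_orbits_semiconj:
  assumes f: "\<And>x. x \<in> A \<Longrightarrow> f x \<in> A" and c: "\<And>x. x \<in> A \<Longrightarrow> c (f x) = g (c x)"
    and "c ` A \<subseteq> B" and "meets_orbits g B R"
  shows "meets_orbits f A {x \<in> A. c x \<in> R}"
  unfolding meets_orbits_def
proof
  fix x assume x: "x \<in> A"
  have iter: "(f ^^ k) x \<in> A \<and> c ((f ^^ k) x) = (g ^^ k) (c x)" for k
    by (induction k) (use x f c in auto)
  obtain k where "(g ^^ k) (c x) \<in> R" using assms(3,4) x unfolding meets_orbits_def by blast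
  then show "\<exists>k. (f ^^ k) x \<in> {x \<in> A. c x \<in> R}" using iter by auto
qed

lemma cyc_le: "cyc n f \<le> n"
  unfolding cyc_def by (metis card_image_le card_lessThan finite_lessThan)

lemma cyc_pos: "0 < n \<Longrightarrow> 0 < cyc n f"
  unfolding cyc_def by (auto simp: card_gt_0_iff)

lemma cyc_eq_card_orbits:
  assumes "f permutes {..<n}"
  shows "cyc n f = card (orbit f ` {..<n})"
proof -
  have "permutation f" by (rule permutes_imp_permutation[OF finite_lessThan assms])
  then show ?thesis unfolding cyc_def by (simp add: orbit_altdef_permutation)
qed

lemma orbit_funpow_eq:
  assumes "f permutes S" "finite S"
  shows "orbit f ((f ^^ k) x) = orbit f x"
proof -
  have "permutation f" using assms by (auto simp: permutation_permutes)
  then have "(f ^^ k) x \<in> orbit f x" by (intro funpow_in_orbit permutation_self_in_orbit)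
  then show ?thesis by (rule orbit_cyclic_eq3[OF cyclic_on_orbit[OF assms]])
qed

lemma cyc_le_card_if_meets_orbits:
  assumes f: "f permutes {..<n}" and "finite R" "meets_orbits f {..<n} R"
  shows "cyc n f \<le> card R"
proof -
  have "orbit f ` {..<n} \<subseteq> orbit f ` R"
  proof
    fix C assume "C \<in> orbit f ` {..<n}"
    then obtain x where x: "x < n" "C = orbit f x" by auto
    then obtain k where "(f ^^ k) x \<in> R" using assms(3) unfolding meets_orbits_def by blast
    moreover have "orbit f ((f ^^ k) x) = C" using x(2) orbit_funpow_eq[OF f finite_lessThan]
      by simp
    ultimately show "C \<in> orbit f ` R" by blast
  qed
  then have "card (orbit f ` {..<n}) \<le> card (orbit f ` R)" using assms(2) by (simp add: card_mono)
  also have "\<dots> \<le> card R" using assms(2) by (rule card_image_le)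
  finally show ?thesis using cyc_eq_card_orbits[OF f] by simp
qed

lemma meets_orbits_if_generates:
  assumes f: "f permutes S" "finite S" and "\<And>x. x \<in> S \<Longrightarrow> \<exists>r\<in>R. \<exists>k. (f ^^ k) r = x"
  shows "meets_orbits f S R"
  unfolding meets_orbits_def
proof
  fix x assume "x \<in> S"
  then obtain r k where r: "r \<in> R" "(f ^^ k) r = x" using assms(3) by blast
  have perm: "permutation f" using f by (auto simp: permutation_permutes)
  then have "r \<in> orbit f r" by (rule permutation_self_in_orbit)
  then have "r \<in> orbit f x" using orbit_funpow_eq[OF f, of k r] r(2) by simp
  then show "\<exists>k. (f ^^ k) x \<in> R" using r(1) by (auto simp: orbit_altdef_permutation[OF perm])
qed

lemma meets_orbits_card_le_cyc:
  assumes f: "f permutes {..<n}" and a: "a < n"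
  shows "\<exists>R \<subseteq> {..<n}. a \<in> R \<and> card R \<le> cyc n f \<and> meets_orbits f {..<n} R"
proof -
  have perm: "permutation f" by (rule permutes_imp_permutation[OF finite_lessThan f])
  define rep where "rep C = (SOME r. r < n \<and> orbit f r = C)" for C
  have rep: "rep (orbit f x) < n \<and> orbit f (rep (orbit f x)) = orbit f x" if "x < n" for x
    unfolding rep_def by (rule someI[of _ x]) (use that in auto)
  define R where "R = insert a (rep ` (orbit f ` {..<n} - {orbit f a}))"
  have "R \<subseteq> {..<n}" unfolding R_def using a rep by auto
  moreover have "card R \<le> cyc n f"
  proof -
    have "card (rep ` (orbit f ` {..<n} - {orbit f a})) \<le> card (orbit f ` {..<n} - {orbit f a})"
      by (rule card_image_le) simp
    then have "card R \<le> Suc (card (orbit f ` {..<n} - {orbit f a}))"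
      unfolding R_def by (simp add: card_insert_if)
    also have "\<dots> = cyc n f"
      using a cyc_eq_card_orbits[OF f] cyc_pos[of n f] by (simp add: card_Diff_singleton)
    finally show ?thesis .
  qed
  moreover have "\<exists>k. (f ^^ k) x \<in> R" if x: "x < n" for x
  proof (cases "orbit f x = orbit f a")
    case True
    then have "a \<in> orbit f x" using permutation_self_in_orbit[OF perm, of a] by simp
    then obtain k where "(f ^^ k) x = a" by (auto simp: orbit_altdef_permutation[OF perm])
    then show ?thesis unfolding R_def by blast
  next
    case False
    have "rep (orbit f x) \<in> orbit f x"
      using rep[OF x] permutation_self_in_orbit[OF perm, of "rep (orbit f x)"] by simp
    then obtain k where "(f ^^ k) x = rep (orbit f x)"
      by (auto simp: orbit_altdef_permutation[OF perm])
    moreover have "rep (orbit f x) \<in> R" unfolding R_def using x False by blast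
    ultimately show ?thesis by metis
  qed
  moreover have "a \<in> R" unfolding R_def by simp
  ultimately show ?thesis unfolding meets_orbits_def by blast
qed

lemma shiftp_permutes:
  assumes "\<pi> permutes {..<n}"
  shows "shiftp n \<pi> b permutes {..<n}"
proof (rule inj_imp_permutes)
  show "inj_on (shiftp n \<pi> b) {..<n}"
  proof
    fix x y assume xy: "x \<in> {..<n}" "y \<in> {..<n}" "shiftp n \<pi> b x = shiftp n \<pi> b y"
    then have "\<pi> ((x + b) mod n) = \<pi> ((y + b) mod n)" unfolding shiftp_def by auto
    then have "(x + b) mod n = (y + b) mod n" using permutes_inj[OF assms] by (meson injD)
    then have "[x = y] (mod n)" by (metis cong_add_rcancel_nat cong_def)
    then show "x = y" using xy by (simp add: cong_def)
  qed
  show "shiftp n \<pi> b x \<in> {..<n}" if "x \<in> {..<n}" for x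
    using that permutes_in_image[OF assms] unfolding shiftp_def by auto
  show "shiftp n \<pi> b x = x" if "x \<notin> {..<n}" for x using that unfolding shiftp_def by auto
qed simp

lemma shiftp_mod: "shiftp n \<pi> (b mod n) = shiftp n \<pi> b"
  unfolding shiftp_def mod_add_right_eq ..

lemma tmax_lower_bound:
  assumes "\<pi> permutes {..<n}" "0 < n" "\<And>b. b < n \<Longrightarrow> cyc n (shiftp n \<pi> b) \<le> K"
  shows "n - K \<le> tmax n"
proof -
  have classes: "{tperm n (shiftp n \<pi> b) | b. b < n} = (\<lambda>b. tperm n (shiftp n \<pi> b)) ` {..<n}"
    by auto
  have "n - K \<le> tclass n \<pi>" unfolding tclass_def classes
    using assms(2,3) by (subst Min_ge_iff) (auto simp: tperm_def intro!: diff_le_mono2)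
  also have "tclass n \<pi> \<le> tmax n" unfolding tmax_def
  proof (rule Max_ge)
    have "{tclass n \<pi> | \<pi>. \<pi> permutes {..<n}} = tclass n ` {\<pi>. \<pi> permutes {..<n}}" by auto
    then show "finite {tclass n \<pi> | \<pi>. \<pi> permutes {..<n}}" by (simp add: finite_permutations)
  qed (use assms(1) in auto)
  finally show ?thesis .
qed

lemma tmax_attained:
  "\<exists>\<pi>. \<pi> permutes {..<n} \<and> (\<forall>b<n. cyc n (shiftp n \<pi> b) + tmax n \<le> n)"
proof -
  have "{tclass n \<pi> | \<pi>. \<pi> permutes {..<n}} = tclass n ` {\<pi>. \<pi> permutes {..<n}}" by auto
  then have "finite {tclass n \<pi> | \<pi>. \<pi> permutes {..<n}}" by (simp add: finite_permutations)
  moreover have "{tclass n \<pi> | \<pi>. \<pi> permutes {..<n}} \<noteq> {}" using permutes_id by blast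
  ultimately have "tmax n \<in> {tclass n \<pi> | \<pi>. \<pi> permutes {..<n}}" unfolding tmax_def by (rule Max_in)
  then obtain \<pi> where \<pi>: "\<pi> permutes {..<n}" "tmax n = tclass n \<pi>" by auto
  have "cyc n (shiftp n \<pi> b) + tmax n \<le> n" if "b < n" for b
  proof -
    have "{tperm n (shiftp n \<pi> b) | b. b < n} = (\<lambda>b. tperm n (shiftp n \<pi> b)) ` {..<n}" by auto
    then have "tclass n \<pi> \<le> tperm n (shiftp n \<pi> b)" unfolding tclass_def
      using that by (simp add: Min_le)
    then show ?thesis using \<pi>(2) cyc_le[of n "shiftp n \<pi> b"] unfolding tperm_def by linarith
  qed
  with \<pi> show ?thesis by blast
qed

lemma tmax_less:
  assumes "0 < n"
  shows "tmax n < n"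
proof -
  obtain \<pi> where "cyc n (shiftp n \<pi> 0) + tmax n \<le> n" using tmax_attained[of n] assms by blast
  then show ?thesis using cyc_pos[OF assms, of "shiftp n \<pi> 0"] by linarith
qed

definition block_perm :: "nat \<Rightarrow> nat \<Rightarrow> (nat \<Rightarrow> nat) \<Rightarrow> (nat \<Rightarrow> nat) \<Rightarrow> nat \<Rightarrow> nat" where
  "block_perm n m \<pi>n \<pi>m x = (if x < n * m then
     \<pi>m (x mod m) + m * (if \<pi>m (x mod m) = 0 then \<pi>n (x div m) else x div m) else x)"

lemma digits_less:
  assumes "j < m" "i < n"
  shows "j + m * i < n * (m::nat)"
proof -
  have "j + m * i < m * Suc i" using assms(1) by simp
  also have "\<dots> \<le> m * n" using assms(2) by (intro mult_le_mono2) simp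
  finally show ?thesis by (simp add: mult.commute)
qed

lemma digits_decode:
  assumes "j < m"
  shows "(j + m * i) mod m = j" "(j + m * i) div (m::nat) = i"
  using assms by auto

lemma block_perm_digits:
  assumes \<pi>n: "\<pi>n permutes {..<n}" and \<pi>m: "\<pi>m permutes {..<m}" and x: "x < n * m"
  shows "block_perm n m \<pi>n \<pi>m x mod m = \<pi>m (x mod m)"
    and "block_perm n m \<pi>n \<pi>m x div m = (if \<pi>m (x mod m) = 0 then \<pi>n (x div m) else x div m)"
    and "block_perm n m \<pi>n \<pi>m x < n * m"
proof -
  define H where "H = (if \<pi>m (x mod m) = 0 then \<pi>n (x div m) else x div m)"
  have "0 < m" using x by (cases "m = 0") auto
  then have j: "\<pi>m (x mod m) < m" using permutes_in_image[OF \<pi>m] by simp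
  have "x div m < n" using x by (simp add: less_mult_imp_div_less)
  then have "H < n" unfolding H_def using permutes_in_image[OF \<pi>n] by simp
  have "block_perm n m \<pi>n \<pi>m x = \<pi>m (x mod m) + m * H" unfolding block_perm_def H_def using x
    by simp
  then show "block_perm n m \<pi>n \<pi>m x mod m = \<pi>m (x mod m)"
    "block_perm n m \<pi>n \<pi>m x div m = H" "block_perm n m \<pi>n \<pi>m x < n * m"
    using digits_decode[OF j] digits_less[OF j \<open>H < n\<close>] by simp_all
qed

lemma block_perm_permutes:
  assumes \<pi>n: "\<pi>n permutes {..<n}" and \<pi>m: "\<pi>m permutes {..<m}"
  shows "block_perm n m \<pi>n \<pi>m permutes {..<n * m}"
proof (rule inj_imp_permutes)
  note digits = block_perm_digits[OF \<pi>n \<pi>m]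
  show "inj_on (block_perm n m \<pi>n \<pi>m) {..<n * m}"
  proof
    fix x y assume x: "x \<in> {..<n * m}" and y: "y \<in> {..<n * m}"
      and eq: "block_perm n m \<pi>n \<pi>m x = block_perm n m \<pi>n \<pi>m y"
    have "\<pi>m (x mod m) = \<pi>m (y mod m)" using digits(1) x y eq by (metis lessThan_iff)
    then have low: "x mod m = y mod m" using permutes_inj[OF \<pi>m] by (meson injD)
    have "(if \<pi>m (x mod m) = 0 then \<pi>n (x div m) else x div m)
        = (if \<pi>m (x mod m) = 0 then \<pi>n (y div m) else y div m)"
      using digits(2) x y eq low by (metis lessThan_iff)
    then have "x div m = y div m" using permutes_inj[OF \<pi>n] by (auto split: if_splits dest: injD)
    with low show "x = y" by (metis div_mod_decomp)
  qed
  show "block_perm n m \<pi>n \<pi>m x \<in> {..<n * m}" if "x \<in> {..<n * m}" for x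
    using digits(3) that by simp
  show "block_perm n m \<pi>n \<pi>m x = x" if "x \<notin> {..<n * m}" for x
    using that by (simp add: block_perm_def)
qed simp

lemma shiftp_block_perm_digits:
  fixes n m b x :: nat and \<pi>n \<pi>m :: "nat \<Rightarrow> nat"
  defines "\<sigma> \<equiv> shiftp (n * m) (block_perm n m \<pi>n \<pi>m) b" and "\<tau> \<equiv> shiftp m \<pi>m (b mod m)"
    and "i \<equiv> (x div m + (x mod m + b) div m) mod n"
  assumes \<pi>n: "\<pi>n permutes {..<n}" and \<pi>m: "\<pi>m permutes {..<m}" and x: "x < n * m"
  shows "\<sigma> x mod m = \<tau> (x mod m)"
    and "\<sigma> x div m = (if \<tau> (x mod m) = 0 then \<pi>n i else i)"
    and "\<sigma> x < n * m"
proof -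
  define y where "y = (x + b) mod (n * m)"
  have "0 < m" using x by (cases "m = 0") auto
  have "0 < n * m" using x by linarith
  then have y: "y < n * m" unfolding y_def by simp
  have "y mod m = (x + b) mod m" unfolding y_def by (simp add: mod_mod_cancel)
  then have y_low: "\<pi>m (y mod m) = \<tau> (x mod m)"
    unfolding \<tau>_def shiftp_def using \<open>0 < m\<close> by (simp add: mod_add_eq)
  have "(x + b) div m = x div m + (x mod m + b) div m"
  proof -
    have "x + b = (x mod m + b) + m * (x div m)" by simp
    then show ?thesis using \<open>0 < m\<close> by (metis add.commute div_mult_self2 less_not_refl2)
  qed
  moreover have "y div m = (x + b) div m mod n"
    unfolding y_def by (simp add: mod_mult2_eq mult.commute[of n m] \<open>0 < m\<close>)
  ultimately have y_high: "y div m = i" unfolding i_def by simp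
  have "\<sigma> x = block_perm n m \<pi>n \<pi>m y" unfolding \<sigma>_def shiftp_def y_def using x by simp
  then show "\<sigma> x mod m = \<tau> (x mod m)" "\<sigma> x div m = (if \<tau> (x mod m) = 0 then \<pi>n i else i)"
    "\<sigma> x < n * m"
    using block_perm_digits[OF \<pi>n \<pi>m y] y_low y_high by simp_all
qed

lemma block_shift_column_walk:
  fixes n m b :: nat and \<pi>n \<pi>m :: "nat \<Rightarrow> nat"
  defines "\<sigma> \<equiv> shiftp (n * m) (block_perm n m \<pi>n \<pi>m) b" and "\<tau> \<equiv> shiftp m \<pi>m (b mod m)"
  assumes \<pi>n: "\<pi>n permutes {..<n}" and \<pi>m: "\<pi>m permutes {..<m}" and "0 < m"
    and "\<And>j. 0 < j \<Longrightarrow> j \<le> k \<Longrightarrow> (\<tau> ^^ j) 0 \<noteq> 0"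
  shows "\<exists>C. \<forall>i<n. (\<sigma> ^^ k) (m * i) = (\<tau> ^^ k) 0 + m * ((i + C) mod n)"
  using assms(6)
proof (induction k)
  case 0
  show ?case by (intro exI[of _ 0]) simp
next
  case (Suc k)
  then obtain C where C: "\<forall>i<n. (\<sigma> ^^ k) (m * i) = (\<tau> ^^ k) 0 + m * ((i + C) mod n)" by auto
  define j where "j = (\<tau> ^^ k) 0"
  have "j < m" unfolding j_def \<tau>_def
    using permutes_in_funpow_image[OF shiftp_permutes[OF \<pi>m]] \<open>0 < m\<close> by simp
  have "\<tau> j \<noteq> 0" using Suc.prems[of "Suc k"] unfolding j_def by simp
  have "(\<sigma> ^^ Suc k) (m * i) = (\<tau> ^^ Suc k) 0 + m * ((i + (C + (j + b) div m)) mod n)"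
    if "i < n" for i
  proof -
    define x where "x = j + m * ((i + C) mod n)"
    have x: "x < n * m" unfolding x_def using digits_less[OF \<open>j < m\<close>] that by simp
    have "x mod m = j" "x div m = (i + C) mod n" unfolding x_def using digits_decode[OF \<open>j < m\<close>]
      by auto
    then have "\<sigma> x mod m = \<tau> j" "\<sigma> x div m = (i + (C + (j + b) div m)) mod n"
      using shiftp_block_perm_digits[OF \<pi>n \<pi>m x, of b] \<open>\<tau> j \<noteq> 0\<close>
      unfolding \<sigma>_def \<tau>_def by (simp_all add: mod_add_left_eq add.assoc)
    moreover have "(\<sigma> ^^ Suc k) (m * i) = \<sigma> x" using C that unfolding x_def j_def by simp
    moreover have "\<sigma> x = \<sigma> x mod m + m * (\<sigma> x div m)" by simp
    ultimately show ?thesis unfolding j_def by simp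
  qed
  then show ?case by blast
qed

text \<open>\<open>funpow_dist1 \<tau> 0 0\<close> is the first return time of \<open>0\<close> to itself under \<open>\<tau>\<close>.\<close>

lemma block_shift_column_return:
  fixes n m b :: nat and \<pi>n \<pi>m :: "nat \<Rightarrow> nat"
  defines "\<sigma> \<equiv> shiftp (n * m) (block_perm n m \<pi>n \<pi>m) b" and "\<tau> \<equiv> shiftp m \<pi>m (b mod m)"
  assumes \<pi>n: "\<pi>n permutes {..<n}" and \<pi>m: "\<pi>m permutes {..<m}" and "0 < m"
  shows "\<exists>c. \<forall>i<n. (\<sigma> ^^ funpow_dist1 \<tau> 0 0) (m * i) = m * shiftp n \<pi>n c i"
proof -
  define k where "k = funpow_dist \<tau> (\<tau> 0) 0"
  have \<tau>: "\<tau> permutes {..<m}" unfolding \<tau>_def by (rule shiftp_permutes[OF \<pi>m])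
  then have "0 \<in> orbit \<tau> 0" by (intro permutation_self_in_orbit permutes_imp_permutation) auto
  then have return: "(\<tau> ^^ Suc k) 0 = 0" unfolding k_def by (rule funpow_dist1_prop)
  obtain C where C: "\<forall>i<n. (\<sigma> ^^ k) (m * i) = (\<tau> ^^ k) 0 + m * ((i + C) mod n)"
    using block_shift_column_walk[OF \<pi>n \<pi>m \<open>0 < m\<close>, of k b] funpow_dist1_least[of _ \<tau> 0 0]
    unfolding \<sigma>_def \<tau>_def k_def by fastforce
  define j where "j = (\<tau> ^^ k) 0"
  have "j < m" unfolding j_def using permutes_in_funpow_image[OF \<tau>] \<open>0 < m\<close> by simp
  have "\<tau> j = 0" using return unfolding j_def by simp
  have "(\<sigma> ^^ Suc k) (m * i) = m * shiftp n \<pi>n (C + (j + b) div m) i" if "i < n" for i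
  proof -
    define x where "x = j + m * ((i + C) mod n)"
    have x: "x < n * m" unfolding x_def using digits_less[OF \<open>j < m\<close>] that by simp
    have "x mod m = j" "x div m = (i + C) mod n" unfolding x_def using digits_decode[OF \<open>j < m\<close>]
      by auto
    then have "\<sigma> x mod m = 0" "\<sigma> x div m = \<pi>n ((i + (C + (j + b) div m)) mod n)"
      using shiftp_block_perm_digits[OF \<pi>n \<pi>m x, of b] \<open>\<tau> j = 0\<close>
      unfolding \<sigma>_def \<tau>_def by (simp_all add: mod_add_left_eq add.assoc)
    moreover have "(\<sigma> ^^ Suc k) (m * i) = \<sigma> x" using C that unfolding x_def j_def by simp
    moreover have "\<sigma> x = \<sigma> x mod m + m * (\<sigma> x div m)" by simp
    ultimately show ?thesis using that unfolding shiftp_def by simp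
  qed
  then show ?thesis unfolding k_def by blast
qed

lemma card_residue_class_le: "card {x. x < n * m \<and> x mod m = r} \<le> (n::nat)"
proof -
  have "{x. x < n * m \<and> x mod m = r} \<subseteq> (\<lambda>i. r + m * i) ` {..<n}"
  proof
    fix x assume "x \<in> {x. x < n * m \<and> x mod m = r}"
    then have "x = r + m * (x div m)" "x div m < n" by (auto simp: less_mult_imp_div_less)
    then show "x \<in> (\<lambda>i. r + m * i) ` {..<n}" by blast
  qed
  then have "card {x. x < n * m \<and> x mod m = r} \<le> card ((\<lambda>i. r + m * i) ` {..<n})"
    by (intro card_mono) auto
  also have "\<dots> \<le> n" using card_image_le[of "{..<n}" "\<lambda>i. r + m * i"] by simp
  finally show ?thesis .
qed

lemma card_column_le:
  assumes "finite R"
  shows "card {x. x < n * m \<and> x mod m = 0 \<and> x div m \<in> R} \<le> card (R::nat set)"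
proof (rule card_inj_on_le[of "\<lambda>x. x div m"])
  show "inj_on (\<lambda>x. x div m) {x. x < n * m \<and> x mod m = 0 \<and> x div m \<in> R}"
    unfolding inj_on_def by (metis (mono_tags) div_mult_mod_eq mem_Collect_eq)
qed (use assms in auto)

lemma meets_orbits_column:
  fixes n m L :: nat and \<sigma> \<rho> :: "nat \<Rightarrow> nat"
  assumes return: "\<And>i. i < n \<Longrightarrow> (\<sigma> ^^ L) (m * i) = m * \<rho> i"
    and \<rho>: "\<rho> permutes {..<n}" and "0 < m" and Rf: "meets_orbits \<rho> {..<n} Rf"
  shows "meets_orbits \<sigma> {x. x < n * m \<and> x mod m = 0} {x. x < n * m \<and> x mod m = 0 \<and> x div m \<in> Rf}"
proof -
  define C where "C = {x. x < n * m \<and> x mod m = 0}"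
  have column: "(\<sigma> ^^ L) x \<in> C \<and> (\<sigma> ^^ L) x div m = \<rho> (x div m)" if "x \<in> C" for x
  proof -
    define i where "i = x div m"
    have "x < n * m" "x mod m = 0" using that unfolding C_def by auto
    then have "x = m * i" "i < n" using mult_div_mod_eq[of m x] unfolding i_def
      by (simp_all add: less_mult_imp_div_less)
    then have "(\<sigma> ^^ L) x = m * \<rho> i" using return by simp
    moreover have "m * \<rho> i < n * m"
      using digits_less[OF \<open>0 < m\<close>, of "\<rho> i" n] permutes_in_image[OF \<rho>] \<open>i < n\<close> by simp
    ultimately show ?thesis using \<open>0 < m\<close> unfolding C_def i_def by simp
  qed
  have "meets_orbits (\<sigma> ^^ L) C {x \<in> C. x div m \<in> Rf}"
    by (rule meets_orbits_semiconj[OF _ _ _ Rf])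
      (use column in \<open>auto simp: C_def less_mult_imp_div_less\<close>)
  then show ?thesis unfolding C_def by (simp add: meets_orbits_funpowD conj_assoc)
qed

lemma cyc_shiftp_block_perm:
  fixes n m b :: nat and \<pi>n \<pi>m :: "nat \<Rightarrow> nat"
  defines "\<sigma> \<equiv> shiftp (n * m) (block_perm n m \<pi>n \<pi>m) b" and "\<tau> \<equiv> shiftp m \<pi>m (b mod m)"
  assumes \<pi>n: "\<pi>n permutes {..<n}" and \<pi>m: "\<pi>m permutes {..<m}" and "0 < n" "0 < m"
  shows "\<exists>c. cyc (n * m) \<sigma> + n \<le> n * cyc m \<tau> + cyc n (shiftp n \<pi>n c)"
proof -
  define N where "N = n * m"
  have \<sigma>: "\<sigma> permutes {..<N}" unfolding \<sigma>_def N_def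
    by (intro shiftp_permutes block_perm_permutes \<pi>n \<pi>m)
  have \<tau>: "\<tau> permutes {..<m}" unfolding \<tau>_def by (rule shiftp_permutes[OF \<pi>m])
  obtain c where c: "\<And>i. i < n \<Longrightarrow> (\<sigma> ^^ funpow_dist1 \<tau> 0 0) (m * i) = m * shiftp n \<pi>n c i"
    using block_shift_column_return[OF \<pi>n \<pi>m \<open>0 < m\<close>, of b] unfolding \<sigma>_def \<tau>_def by blast
  define \<rho> where "\<rho> = shiftp n \<pi>n c"
  have \<rho>: "\<rho> permutes {..<n}" unfolding \<rho>_def by (rule shiftp_permutes[OF \<pi>n])
  obtain R0 where R0: "R0 \<subseteq> {..<m}" "0 \<in> R0" "card R0 \<le> cyc m \<tau>" "meets_orbits \<tau> {..<m} R0"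
    using meets_orbits_card_le_cyc[OF \<tau> \<open>0 < m\<close>] by blast
  have "finite R0" using R0(1) finite_subset by blast
  obtain Rf where Rf: "Rf \<subseteq> {..<n}" "card Rf \<le> cyc n \<rho>" "meets_orbits \<rho> {..<n} Rf"
    using meets_orbits_card_le_cyc[OF \<rho> \<open>0 < n\<close>] by blast
  define F where "F r = {x. x < N \<and> x mod m = r}" for r
  define H where "H r = (if r = 0 then {x. x < N \<and> x mod m = 0 \<and> x div m \<in> Rf} else F r)" for r
  have "meets_orbits \<sigma> {..<N} {x \<in> {..<N}. x mod m \<in> R0}"
  proof (rule meets_orbits_semiconj[OF _ _ _ R0(4)])
    show "\<sigma> x \<in> {..<N}" "\<sigma> x mod m = \<tau> (x mod m)" if "x \<in> {..<N}" for x
      using that shiftp_block_perm_digits[OF \<pi>n \<pi>m, of x b] unfolding \<sigma>_def \<tau>_def N_def by auto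
  qed (use \<open>0 < m\<close> in auto)
  moreover have "{x \<in> {..<N}. x mod m \<in> R0} = (\<Union>r\<in>R0. F r)" unfolding F_def by auto
  moreover have "meets_orbits \<sigma> (F r) (H r)" for r
  proof (cases "r = 0")
    case True
    then show ?thesis using meets_orbits_column[OF c[folded \<rho>_def] \<rho> \<open>0 < m\<close> Rf(3)]
      unfolding H_def F_def N_def by simp
  qed (simp add: H_def meets_orbits_refl)
  ultimately have "meets_orbits \<sigma> {..<N} (\<Union>r\<in>R0. H r)" using meets_orbits_UN by metis
  moreover have "finite (H r)" for r unfolding H_def F_def by auto
  ultimately have "cyc N \<sigma> \<le> card (\<Union>r\<in>R0. H r)"
    using \<open>finite R0\<close> by (intro cyc_le_card_if_meets_orbits[OF \<sigma>]) auto
  also have "\<dots> \<le> (\<Sum>r\<in>R0. card (H r))" by (rule card_UN_le) (use \<open>finite R0\<close> in auto)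
  also have "\<dots> = card (H 0) + (\<Sum>r\<in>R0 - {0}. card (H r))"
    using R0(2) \<open>finite R0\<close> by (subst sum.remove) auto
  also have "\<dots> \<le> card Rf + card (R0 - {0}) * n"
  proof (rule add_mono)
    show "card (H 0) \<le> card Rf"
      unfolding H_def N_def using card_column_le[of Rf n m] Rf(1) finite_subset by auto
    show "(\<Sum>r\<in>R0 - {0}. card (H r)) \<le> card (R0 - {0}) * n"
      using sum_bounded_above[of "R0 - {0}" "\<lambda>r. card (H r)" n] card_residue_class_le
      unfolding H_def F_def N_def by simp
  qed
  also have "card (R0 - {0}) * n + n = card R0 * n"
    using R0(2) \<open>finite R0\<close> by (cases "card R0") auto
  ultimately have "cyc N \<sigma> + n \<le> card Rf + card R0 * n" by linarith
  also have "\<dots> \<le> cyc n \<rho> + cyc m \<tau> * n" using Rf(2) R0(3) by (intro add_mono mult_le_mono1)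
  finally have "cyc N \<sigma> + n \<le> n * cyc m \<tau> + cyc n \<rho>" by (simp add: mult.commute)
  then show ?thesis unfolding N_def \<rho>_def by blast
qed

lemma tmax_mult_lower_bound:
  assumes "0 < n" "0 < m"
  shows "n * tmax m + tmax n \<le> tmax (n * m)"
proof -
  obtain \<pi>m where \<pi>m: "\<pi>m permutes {..<m}" "\<And>b. b < m \<Longrightarrow> cyc m (shiftp m \<pi>m b) + tmax m \<le> m"
    using tmax_attained[of m] by blast
  obtain \<pi>n where \<pi>n: "\<pi>n permutes {..<n}" "\<And>b. b < n \<Longrightarrow> cyc n (shiftp n \<pi>n b) + tmax n \<le> n"
    using tmax_attained[of n] by blast
  have cyc_bound:
    "cyc (n * m) (shiftp (n * m) (block_perm n m \<pi>n \<pi>m) b) \<le> n * m - (n * tmax m + tmax n)"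
    for b
  proof -
    obtain c where c: "cyc (n * m) (shiftp (n * m) (block_perm n m \<pi>n \<pi>m) b) + n
        \<le> n * cyc m (shiftp m \<pi>m (b mod m)) + cyc n (shiftp n \<pi>n c)"
      using cyc_shiftp_block_perm[OF \<pi>n(1) \<pi>m(1) assms] by blast
    have "cyc m (shiftp m \<pi>m (b mod m)) \<le> m - tmax m" using \<pi>m(2)[of "b mod m"] \<open>0 < m\<close> by simp
    then have "n * cyc m (shiftp m \<pi>m (b mod m)) \<le> n * m - n * tmax m"
      by (metis mult_le_mono2 diff_mult_distrib2)
    moreover have "cyc n (shiftp n \<pi>n c) \<le> n - tmax n"
      using \<pi>n(2)[of "c mod n"] \<open>0 < n\<close> by (simp add: shiftp_mod)
    moreover have "n * tmax m + n \<le> n * m"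
      using tmax_less[OF \<open>0 < m\<close>] mult_le_mono2[of "Suc (tmax m)" m n] by simp
    ultimately show ?thesis using c tmax_less[OF \<open>0 < n\<close>] by linarith
  qed
  have "n * m - (n * m - (n * tmax m + tmax n)) \<le> tmax (n * m)"
    by (rule tmax_lower_bound[OF block_perm_permutes[OF \<pi>n(1) \<pi>m(1)] _ cyc_bound])
      (use assms in simp)
  moreover have "n * tmax m + tmax n \<le> n * m"
    using tmax_less[OF \<open>0 < m\<close>] tmax_less[OF \<open>0 < n\<close>] mult_le_mono2[of "Suc (tmax m)" m n] by simp
  ultimately show ?thesis by simp
qed

lemma cong_int_less_imp_eq: "[int a = int b] (mod int n) \<Longrightarrow> a < n \<Longrightarrow> b < n \<Longrightarrow> a = b"
  by (simp add: cong_int_iff cong_less_modulus_unique_nat)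

lemma cong_mod_add_diff: "[int ((y0 + c) mod n) - int y0 = int c] (mod int n)"
proof -
  have "[int ((y0 + c) mod n) = int y0 + int c] (mod int n)" by (simp add: cong_def zmod_int)
  then show ?thesis using cong_diff[OF _ cong_refl[of "int y0"]] by fastforce
qed

lemma primroot_pow_cong_iff:
  assumes "prime p" "residue_primroot p a"
  shows "[a ^ i = a ^ j] (mod p) \<longleftrightarrow> [i = j] (mod (p - 1))"
  using order_divides_expdiff[of p a i j] assms by (simp add: residue_primroot_def totient_prime)

lemma prime_not_dvd_primroot_pow:
  assumes "prime p" "residue_primroot p a"
  shows "\<not> p dvd a ^ k"
proof
  assume "p dvd a ^ k"
  then have "p dvd a" using assms(1) prime_dvd_power by blast
  then show False using assms prime_gt_1_nat[OF assms(1)]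
    by (auto simp: residue_primroot_def dest: coprime_common_divisor_nat)
qed

lemma residue_primroot_log:
  assumes "1 < m" "residue_primroot m g" "coprime z (int m)"
  shows "\<exists>k. [int g ^ k = z] (mod int m)"
proof -
  define w where "w = nat (z mod int m)"
  have wz: "int w = z mod int m" unfolding w_def using assms(1) by simp
  have "coprime (z mod int m) (int m)" using assms(1,3) by (subst coprime_mod_left_iff) auto
  then have "coprime w m" unfolding wz[symmetric] by simp
  moreover have "w < m" using wz pos_mod_bound[of "int m" z] assms(1) by linarith
  moreover have "w \<noteq> 0" using \<open>coprime w m\<close> assms(1) by (intro notI) simp
  ultimately have "w \<in> totatives m" by (auto simp: totatives_def)
  then have "w \<in> (\<lambda>i. g ^ i mod m) ` {..<totient m}"
    using residue_primroot_is_generator[OF assms(1,2)] unfolding bij_betw_def by simp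
  then obtain k where "g ^ k mod m = w" by auto
  then have "int (g ^ k mod m) = z mod int m" using wz by simp
  then have "int (g ^ k) mod int m = z mod int m" by (simp only: of_nat_mod)
  then have "[int g ^ k = z] (mod int m)" unfolding cong_def by (simp only: of_nat_power)
  then show ?thesis ..
qed

lemma prime_primroot_log:
  assumes "prime p" "residue_primroot p g" "\<not> int p dvd z"
  shows "\<exists>k. [int g ^ k = z] (mod int p)"
proof (rule residue_primroot_log)
  show "1 < p" using assms(1) prime_gt_1_nat by blast
  have "prime (int p)" using assms(1) by simp
  then show "coprime z (int p)" using prime_imp_coprime[of "int p" z] assms(3)
    by (simp add: coprime_commute)
qed fact

lemma coprime_primroot_pow_minus_1:
  assumes "prime p" "residue_primroot p a" "\<not> (p - 1) dvd e"
  shows "coprime (int a ^ e - 1) (int p)"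
proof -
  have "\<not> [e = 0] (mod (p - 1))" using assms(3) by (simp add: cong_0_iff)
  then have "\<not> [a ^ e = a ^ 0] (mod p)" using primroot_pow_cong_iff[OF assms(1,2)] by blast
  then have "\<not> [int a ^ e = 1] (mod int p)" using cong_int_iff[of "a ^ e" 1 p] by simp
  then have "\<not> int p dvd (int a ^ e - 1)" by (simp add: cong_iff_dvd_diff)
  moreover have "prime (int p)" using assms(1) by simp
  ultimately show ?thesis using prime_imp_coprime[of "int p"] coprime_commute by blast
qed

definition affine_mod :: "nat \<Rightarrow> (nat \<Rightarrow> nat) \<Rightarrow> int \<Rightarrow> int \<Rightarrow> bool" where
  "affine_mod n \<rho> M d \<longleftrightarrow> (\<forall>y<n. \<rho> y < n \<and> [int (\<rho> y) = M * int y + d] (mod int n))"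

lemma affine_modD:
  "affine_mod n \<rho> M d \<Longrightarrow> y < n \<Longrightarrow> \<rho> y < n"
  "affine_mod n \<rho> M d \<Longrightarrow> y < n \<Longrightarrow> [int (\<rho> y) = M * int y + d] (mod int n)"
  unfolding affine_mod_def by auto

lemma affine_mod_id: "affine_mod n id 1 0"
  unfolding affine_mod_def by simp

lemma affine_mod_comp:
  assumes f: "affine_mod n f M d" and g: "affine_mod n g M' d'"
  shows "affine_mod n (f \<circ> g) (M * M') (M * d' + d)"
  unfolding affine_mod_def
proof (intro allI impI conjI)
  fix y assume y: "y < n"
  then have gy: "g y < n" by (rule affine_modD(1)[OF g])
  then show "(f \<circ> g) y < n" by (simp add: affine_modD(1)[OF f])
  have "[int (f (g y)) = M * int (g y) + d] (mod int n)" by (rule affine_modD(2)[OF f gy])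
  also have "[M * int (g y) + d = M * (M' * int y + d') + d] (mod int n)"
    by (intro cong_add cong_mult cong_refl affine_modD(2)[OF g y])
  finally show "[int ((f \<circ> g) y) = M * M' * int y + (M * d' + d)] (mod int n)"
    by (simp add: algebra_simps)
qed

lemma affine_mod_funpow:
  assumes "affine_mod n \<rho> M d"
  shows "affine_mod n (\<rho> ^^ k) (M ^ k) ((\<Sum>l<k. M ^ l) * d)"
proof (induction k)
  case 0
  show ?case using affine_mod_id[of n] by (simp add: id_def)
next
  case (Suc k)
  have "affine_mod n (\<rho> \<circ> \<rho> ^^ k) (M * M ^ k) (M * ((\<Sum>l<k. M ^ l) * d) + d)"
    by (rule affine_mod_comp[OF assms Suc.IH])
  moreover have "M * ((\<Sum>l<k. M ^ l) * d) + d = (\<Sum>l<Suc k. M ^ l) * d"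
    unfolding sum.lessThan_Suc_shift by (simp add: sum_distrib_left distrib_right mult.assoc)
  ultimately have "affine_mod n (\<rho> \<circ> \<rho> ^^ k) (M * M ^ k) ((\<Sum>l<Suc k. M ^ l) * d)" by simp
  then show ?case by (simp only: funpow.simps(2) power_Suc)
qed

lemma affine_mod_cong_multiplier:
  assumes "affine_mod n \<rho> M d" "[M = M'] (mod int n)"
  shows "affine_mod n \<rho> M' d"
  unfolding affine_mod_def
proof (intro allI impI conjI)
  fix y assume y: "y < n"
  show "\<rho> y < n" using assms(1) y by (rule affine_modD(1))
  have "[int (\<rho> y) = M * int y + d] (mod int n)" using assms(1) y by (rule affine_modD(2))
  also have "[M * int y + d = M' * int y + d] (mod int n)"
    by (intro cong_add cong_mult cong_refl assms(2))
  finally show "[int (\<rho> y) = M' * int y + d] (mod int n)" .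
qed

lemma affine_mod_fixed_point:
  assumes "0 < n" "coprime (M - 1) (int n)"
  shows "\<exists>y0<n. [M * int y0 + d = int y0] (mod int n)"
proof -
  obtain u where u: "[(M - 1) * u = 1] (mod int n)" using cong_solve_coprime_int[OF assms(2)]
    by blast
  define y where "y = (- d * u) mod int n"
  have y: "0 \<le> y" "y < int n" using assms(1) unfolding y_def by auto
  have "[(M - 1) * y = (M - 1) * (- d * u)] (mod int n)" unfolding y_def
    by (simp add: cong_def mod_mult_right_eq)
  also have "(M - 1) * (- d * u) = - d * ((M - 1) * u)" by (simp add: algebra_simps)
  also have "[\<dots> = - d * 1] (mod int n)" by (rule cong_mult[OF cong_refl u])
  finally have "[(M - 1) * y + (d + y) = - d + (d + y)] (mod int n)" by (intro cong_add) simp_all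
  then have "[M * y + d = y] (mod int n)" by (simp add: algebra_simps)
  then show ?thesis using y by (intro exI[of _ "nat y"]) auto
qed

lemma affine_mod_funpow_fixed_point:
  assumes "affine_mod n \<rho> M d" "[M * y0 + d = y0] (mod int n)" "y < n"
  shows "(\<rho> ^^ k) y < n" "[int ((\<rho> ^^ k) y) = y0 + M ^ k * (int y - y0)] (mod int n)"
proof -
  note it = affine_mod_funpow[OF assms(1), of k]
  show "(\<rho> ^^ k) y < n" using it assms(3) by (rule affine_modD)
  have "[d = (1 - M) * y0] (mod int n)"
    using cong_diff[OF assms(2) cong_refl[of "M * y0"]] by (simp add: algebra_simps)
  then have "[M ^ k * int y + (\<Sum>l<k. M ^ l) * d
      = M ^ k * int y + (\<Sum>l<k. M ^ l) * ((1 - M) * y0)] (mod int n)"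
    by (intro cong_add cong_mult cong_refl)
  also have "(\<Sum>l<k. M ^ l) * ((1 - M) * y0) = ((1 - M) * (\<Sum>l<k. M ^ l)) * y0"
    by (simp only: mult.commute mult.left_commute)
  also have "\<dots> = (1 - M ^ k) * y0" by (simp only: one_diff_power_eq)
  also have "M ^ k * int y + (1 - M ^ k) * y0 = y0 + M ^ k * (int y - y0)"
    by (simp add: algebra_simps)
  finally have "[M ^ k * int y + (\<Sum>l<k. M ^ l) * d = y0 + M ^ k * (int y - y0)] (mod int n)" .
  then show "[int ((\<rho> ^^ k) y) = y0 + M ^ k * (int y - y0)] (mod int n)"
    using affine_modD(2)[OF it assms(3)] by (rule cong_trans[rotated])
qed

lemma affine_mod_funpow_eqI:
  assumes \<rho>: "affine_mod n \<rho> M d" and y0: "[M * int y0 + d = int y0] (mod int n)"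
    and "y < n" "x < n" and "[M ^ k * (int y - int y0) = int x - int y0] (mod int n)"
  shows "(\<rho> ^^ k) y = x"
proof -
  have "[int ((\<rho> ^^ k) y) = int y0 + M ^ k * (int y - int y0)] (mod int n)"
    by (rule affine_mod_funpow_fixed_point(2)[OF \<rho> y0 \<open>y < n\<close>])
  also have "[int y0 + M ^ k * (int y - int y0) = int y0 + (int x - int y0)] (mod int n)"
    by (intro cong_add cong_refl assms(5))
  finally have "[int ((\<rho> ^^ k) y) = int x] (mod int n)" by simp
  then show ?thesis
    using affine_mod_funpow_fixed_point(1)[OF \<rho> y0 \<open>y < n\<close>] \<open>x < n\<close> by (rule cong_int_less_imp_eq)
qed

lemma affine_mod_funpow_eq_shift:
  assumes \<rho>: "affine_mod n \<rho> M d" and y0: "[M * int y0 + d = int y0] (mod int n)" and "x < n"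
    and "[M ^ k * int c = int x - int y0] (mod int n)"
  shows "(\<rho> ^^ k) ((y0 + c) mod n) = x"
proof (rule affine_mod_funpow_eqI[OF \<rho> y0 _ \<open>x < n\<close>])
  show "(y0 + c) mod n < n" using \<open>x < n\<close> by simp
  show "[M ^ k * (int ((y0 + c) mod n) - int y0) = int x - int y0] (mod int n)"
    using cong_mult[OF cong_refl cong_mod_add_diff] assms(4) by (rule cong_trans)
qed

lemma affine_mod_primroot_meets_orbits:
  assumes q: "prime q" and g: "residue_primroot q g" and e: "0 < e" "\<not> (q - 1) dvd e"
    and \<rho>: "affine_mod q \<rho> (int g ^ e) d"
  shows "\<exists>R. finite R \<and> card R \<le> e + 1 \<and> meets_orbits \<rho> {..<q} R"
proof -
  have "0 < q" using q prime_gt_0_nat by blast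
  obtain y0 where y0: "y0 < q" "[int g ^ e * int y0 + d = int y0] (mod int q)"
    using affine_mod_fixed_point[OF \<open>0 < q\<close> coprime_primroot_pow_minus_1[OF q g e(2)]] by blast
  define R where "R = insert y0 ((\<lambda>i. (y0 + g ^ i) mod q) ` {..<e})"
  have "card R \<le> e + 1"
    using card_image_le[of "{..<e}" "\<lambda>i. (y0 + g ^ i) mod q"] unfolding R_def
      by (simp add: card_insert_if)
  moreover have "\<exists>k. (\<rho> ^^ k) y \<in> R" if y: "y < q" for y
  proof (cases "y = y0")
    case False
    have "\<not> int q dvd (int y - int y0)"
      using cong_int_less_imp_eq[of y y0 q] y y0(1) False by (auto simp: cong_iff_dvd_diff)
    then obtain j where j: "[int g ^ j = int y - int y0] (mod int q)"
      using prime_primroot_log[OF q g] by blast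
    define s where "s = j div e"
    define i where "i = j mod e"
    define k where "k = (q - 2) * s"
    have "q - 1 = Suc (q - 2)" using prime_gt_1_nat[OF q] by linarith
    then have "e * k + j = (q - 1) * (e * s) + i" unfolding k_def s_def i_def
      by (simp add: algebra_simps)
    then have "[g ^ (e * k + j) = g ^ i] (mod q)" using primroot_pow_cong_iff[OF q g]
      by (simp add: cong_def)
    then have gi: "[int g ^ (e * k + j) = int g ^ i] (mod int q)"
      using cong_int_iff[of "g ^ (e * k + j)" "g ^ i" q] by simp
    have "[(int g ^ e) ^ k * (int y - int y0) = (int g ^ e) ^ k * int g ^ j] (mod int q)"
      by (intro cong_mult cong_refl cong_sym[OF j])
    also have "(int g ^ e) ^ k * int g ^ j = int g ^ (e * k + j)"
      by (simp add: power_mult power_add)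
    also note gi
    also have "[int g ^ i = int ((y0 + g ^ i) mod q) - int y0] (mod int q)"
      using cong_sym[OF cong_mod_add_diff[of y0 "g ^ i" q]] by simp
    finally have
      "[(int g ^ e) ^ k * (int y - int y0) = int ((y0 + g ^ i) mod q) - int y0] (mod int q)" .
    then have "(\<rho> ^^ k) y = (y0 + g ^ i) mod q"
      using \<open>0 < q\<close> by (intro affine_mod_funpow_eqI[OF \<rho> y0(2) y]) simp_all
    moreover have "i < e" unfolding i_def using e(1) by simp
    ultimately show ?thesis unfolding R_def by blast
  next
    case True
    then have "(\<rho> ^^ 0) y \<in> R" unfolding R_def by simp
    then show ?thesis ..
  qed
  moreover have "finite R" unfolding R_def by simp
  ultimately show ?thesis unfolding meets_orbits_def by blast
qed

lemma affine_mod_translation_meets_orbits: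
  assumes q: "prime q" and D: "\<not> int q dvd D" and \<rho>: "affine_mod q \<rho> 1 D"
  shows "meets_orbits \<rho> {..<q} {0}"
  unfolding meets_orbits_def
proof
  fix y assume "y \<in> {..<q}"
  then have y: "y < q" by simp
  have "prime (int q)" using q by simp
  then have "coprime (int q) D" using D by (rule prime_imp_coprime)
  then obtain u where u: "[D * u = 1] (mod int q)" using cong_solve_coprime_int
    by (auto simp: coprime_commute)
  define k where "k = nat ((- int y * u) mod int q)"
  have "int k = (- int y * u) mod int q" unfolding k_def using y by simp
  then have "[int y + int k * D = int y + (- int y * u) * D] (mod int q)"
    by (intro cong_add cong_mult cong_refl) (simp add: cong_def)
  also have "int y + (- int y * u) * D = int y - int y * (D * u)" by (simp add: algebra_simps)
  also have "[\<dots> = int y - int y * 1] (mod int q)" by (intro cong_diff cong_mult cong_refl u)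
  finally have zero: "[int y + int k * D = 0] (mod int q)" by simp
  have it: "affine_mod q (\<rho> ^^ k) 1 (int k * D)" using affine_mod_funpow[OF \<rho>, of k] by simp
  have "[int ((\<rho> ^^ k) y) = 1 * int y + int k * D] (mod int q)" using it y by (rule affine_modD(2))
  then have "[int ((\<rho> ^^ k) y) = int 0] (mod int q)" using cong_trans[OF _ zero] by simp
  then have "(\<rho> ^^ k) y = 0" using affine_modD(1)[OF it y]
    by (rule cong_int_less_imp_eq) (use y in simp)
  then show "\<exists>k. (\<rho> ^^ k) y \<in> {0}" by blast
qed

definition mult_perm :: "nat \<Rightarrow> nat \<Rightarrow> nat \<Rightarrow> nat" where
  "mult_perm n g x = (if x < n then g * x mod n else x)"

lemma mult_perm_permutes:
  assumes "coprime g n"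
  shows "mult_perm n g permutes {..<n}"
proof (rule inj_imp_permutes)
  show "inj_on (mult_perm n g) {..<n}"
  proof
    fix x y assume xy: "x \<in> {..<n}" "y \<in> {..<n}" "mult_perm n g x = mult_perm n g y"
    then have "[g * x = g * y] (mod n)" unfolding mult_perm_def cong_def by auto
    then have "[x = y] (mod n)" using cong_mult_lcancel_nat[OF assms] by simp
    then show "x = y" using xy by (simp add: cong_def)
  qed
  show "mult_perm n g x \<in> {..<n}" if "x \<in> {..<n}" for x using that unfolding mult_perm_def by auto
  show "mult_perm n g x = x" if "x \<notin> {..<n}" for x using that unfolding mult_perm_def by auto
qed simp

lemma affine_mod_shiftp_mult_perm:
  assumes "0 < n"
  shows "affine_mod n (shiftp n (mult_perm n g) b) (int g) (int g * int b)"
  unfolding affine_mod_def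
proof (intro allI impI conjI)
  fix y assume "y < n"
  then have eq: "shiftp n (mult_perm n g) b y = g * ((y + b) mod n) mod n"
    unfolding shiftp_def mult_perm_def using assms by simp
  then show "shiftp n (mult_perm n g) b y < n" using assms by simp
  have "[g * ((y + b) mod n) mod n = g * (y + b)] (mod n)" unfolding cong_def
    by (simp add: mod_mult_right_eq)
  then show "[int (shiftp n (mult_perm n g) b y) = int g * int y + int g * int b] (mod int n)"
    unfolding eq by (simp add: cong_int_iff[symmetric] algebra_simps)
qed

lemma shiftp_mult_perm_fixed_point:
  assumes "0 < n" "coprime (int g - 1) (int n)"
  shows "\<exists>x0<n. shiftp n (mult_perm n g) b x0 = x0"
proof -
  obtain x0 where x0: "x0 < n" "[int g * int x0 + int g * int b = int x0] (mod int n)"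
    using affine_mod_fixed_point[OF assms] by blast
  note \<tau> = affine_mod_shiftp_mult_perm[OF assms(1), of g b]
  have "[int (shiftp n (mult_perm n g) b x0) = int x0] (mod int n)"
    using affine_modD(2)[OF \<tau> x0(1)] x0(2) by (rule cong_trans)
  then have "shiftp n (mult_perm n g) b x0 = x0" using affine_modD(1)[OF \<tau> x0(1)] x0(1)
    by (rule cong_int_less_imp_eq)
  then show ?thesis using x0(1) by blast
qed

lemma affine_mod_fixed_pointD:
  assumes "affine_mod n \<rho> M d" "y0 < n" "\<rho> y0 = y0"
  shows "[M * int y0 + d = int y0] (mod int n)"
  using affine_modD(2)[OF assms(1,2)] assms(3) by (simp add: cong_sym)

text \<open>Orbit representatives of \<open>y \<mapsto> g (y + b)\<close> modulo \<open>p\<^sup>2\<close> are its fixed point \<open>y0\<close>, \<open>y0 + 1\<close>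
  and \<open>y0 + p\<close>: every other residue differs from \<open>y0\<close> by a unit or by \<open>p\<close> times a unit.\<close>

lemma cyc_shiftp_mult_perm_prime_square:
  assumes p: "prime p" "2 < p" and gpp: "residue_primroot (p * p) g" and gp: "residue_primroot p g"
  shows "cyc (p * p) (shiftp (p * p) (mult_perm (p * p) g) b) \<le> 3"
proof -
  define N where "N = p * p"
  define \<sigma> where "\<sigma> = shiftp N (mult_perm N g) b"
  have "1 < N" unfolding N_def using one_less_mult[of p p] p(2) by linarith
  then have "0 < N" by simp
  have \<sigma>_perm: "\<sigma> permutes {..<N}" unfolding \<sigma>_def
    using gpp
      by (intro shiftp_permutes mult_perm_permutes)
        (simp add: N_def residue_primroot_def coprime_commute)
  have \<sigma>: "affine_mod N \<sigma> (int g) (int g * int b)"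
    unfolding \<sigma>_def by (rule affine_mod_shiftp_mult_perm[OF \<open>0 < N\<close>])
  have "coprime (int g ^ 1 - 1) (int p)" using coprime_primroot_pow_minus_1[OF p(1) gp, of 1] p(2)
    by simp
  then have "coprime (int g - 1) (int N)" unfolding N_def by simp
  then obtain y0 where y0: "y0 < N" "\<sigma> y0 = y0"
    using shiftp_mult_perm_fixed_point[OF \<open>0 < N\<close>] unfolding \<sigma>_def by blast
  note reach = affine_mod_funpow_eq_shift[OF \<sigma> affine_mod_fixed_pointD[OF \<sigma> y0]]
  have "meets_orbits \<sigma> {..<N} {y0, (y0 + 1) mod N, (y0 + p) mod N}"
  proof (rule meets_orbits_if_generates[OF \<sigma>_perm finite_lessThan])
    fix x assume "x \<in> {..<N}"
    then have x: "x < N" by simp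
    define z where "z = int x - int y0"
    consider "int N dvd z" | "\<not> int p dvd z" | "int p dvd z" "\<not> int N dvd z" by blast
    then show "\<exists>r\<in>{y0, (y0 + 1) mod N, (y0 + p) mod N}. \<exists>k. (\<sigma> ^^ k) r = x"
    proof cases
      case 1
      then have "[int x = int y0] (mod int N)" unfolding z_def by (simp add: cong_iff_dvd_diff)
      then have "x = y0" using x y0(1) by (rule cong_int_less_imp_eq)
      then show ?thesis by (intro bexI[of _ y0] exI[of _ 0]) auto
    next
      case 2
      then have "coprime z (int p)"
        using prime_imp_coprime[of "int p" z] p(1) by (simp add: coprime_commute)
      then have "coprime z (int N)" unfolding N_def by simp
      then obtain k where "[int g ^ k = z] (mod int N)"
        using residue_primroot_log[OF \<open>1 < N\<close> gpp[folded N_def]] by blast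
      then have "(\<sigma> ^^ k) ((y0 + 1) mod N) = x" using reach[OF x, of k 1] unfolding z_def by simp
      then show ?thesis by blast
    next
      case 3
      then obtain w where w: "z = int p * w" by (elim dvdE)
      have "\<not> int p dvd w" using 3(2) unfolding w N_def by simp
      then obtain k where "[int g ^ k = w] (mod int p)" using prime_primroot_log[OF p(1) gp]
        by blast
      then have "int p * int p dvd int p * (int g ^ k - w)" by (simp add: cong_iff_dvd_diff)
      then have "[int g ^ k * int p = z] (mod int N)"
        unfolding N_def w by (simp add: cong_iff_dvd_diff algebra_simps)
      then have "(\<sigma> ^^ k) ((y0 + p) mod N) = x" using reach[OF x, of k p] unfolding z_def by simp
      then show ?thesis by blast
    qed
  qed
  then have "cyc N \<sigma> \<le> card {y0, (y0 + 1) mod N, (y0 + p) mod N}"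
    by (intro cyc_le_card_if_meets_orbits[OF \<sigma>_perm]) simp_all
  also have "\<dots> \<le> 3" by (simp add: card_insert_le_m1 card_insert_if)
  finally show ?thesis unfolding N_def \<sigma>_def .
qed

lemma tmax_prime_square:
  assumes "prime p" "2 < p"
  shows "p * p - 3 \<le> tmax (p * p)"
proof -
  obtain g where g: "\<forall>k>0. residue_primroot (p ^ k) g"
    using residue_primroot_odd_prime_power_exists[of p] assms by (metis prime_odd_nat)
  then have gpp: "residue_primroot (p * p) g" and gp: "residue_primroot p g"
    using g[rule_format, of 2] g[rule_format, of 1] by (simp_all add: power2_eq_square)
  have "mult_perm (p * p) g permutes {..<p * p}"
    using gpp by (intro mult_perm_permutes) (simp add: residue_primroot_def coprime_commute)
  then show ?thesis
    by (rule tmax_lower_bound)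
      (use cyc_shiftp_mult_perm_prime_square[OF assms gpp gp] assms(2) in simp_all)
qed

definition crt :: "nat \<Rightarrow> nat \<Rightarrow> nat \<Rightarrow> nat \<Rightarrow> nat" where
  "crt p q A B = (SOME z. z < p * q \<and> z mod p = A \<and> z mod q = B)"

lemma crt:
  assumes "coprime p q" "A < p" "B < q"
  shows "crt p q A B < p * q" "crt p q A B mod p = A" "crt p q A B mod q = B"
proof -
  obtain z where "z < p * q" "[z = A] (mod p)" "[z = B] (mod q)"
    using binary_chinese_remainder_unique_nat[of p q A B] assms by auto
  then have "\<exists>z. z < p * q \<and> z mod p = A \<and> z mod q = B" using assms(2,3) by (auto simp: cong_def)
  from someI_ex[OF this] show "crt p q A B < p * q" "crt p q A B mod p = A" "crt p q A B mod q = B"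
    unfolding crt_def by auto
qed

lemma crt_unique:
  fixes p q x y :: nat
  assumes "coprime p q" "x < p * q" "y < p * q" "x mod p = y mod p" "x mod q = y mod q"
  shows "x = y"
proof -
  have "[x = y] (mod p * q)"
    using assms(1,4,5) by (intro coprime_cong_mult_nat) (simp_all add: cong_def)
  then show ?thesis using assms(2,3) by (simp add: cong_less_modulus_unique_nat)
qed

text \<open>Under \<open>\<int>\<^sub>p\<^sub>q \<cong> \<int>\<^sub>p \<times> \<int>\<^sub>q\<close> this is the skew product \<open>(j, y) \<mapsto> (a j, mm j \<cdot> y + tt j)\<close>.\<close>

definition crt_perm :: "nat \<Rightarrow> nat \<Rightarrow> nat \<Rightarrow> (nat \<Rightarrow> nat) \<Rightarrow> (nat \<Rightarrow> nat) \<Rightarrow> nat \<Rightarrow> nat" where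
  "crt_perm p q a mm tt x = (if x < p * q then
     crt p q (a * (x mod p) mod p) ((mm (x mod p) * (x mod q) + tt (x mod p)) mod q) else x)"

definition fiber_step :: "nat \<Rightarrow> nat \<Rightarrow> (nat \<Rightarrow> nat) \<Rightarrow> (nat \<Rightarrow> nat) \<Rightarrow> nat \<Rightarrow> nat \<Rightarrow> nat" where
  "fiber_step q b mm tt u y = (mm u * ((y + b) mod q) + tt u) mod q"

primrec fiber_walk ::
  "nat \<Rightarrow> nat \<Rightarrow> (nat \<Rightarrow> nat) \<Rightarrow> (nat \<Rightarrow> nat) \<Rightarrow> (nat \<Rightarrow> nat) \<Rightarrow> nat \<Rightarrow> nat \<Rightarrow> nat" where
  "fiber_walk q b mm tt U 0 = id"
| "fiber_walk q b mm tt U (Suc k) = fiber_step q b mm tt (U k) \<circ> fiber_walk q b mm tt U k"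

lemma crt_perm_permutes:
  assumes pq: "coprime p q" and a: "coprime a p" and mm: "\<And>u. coprime (mm u) q"
  shows "crt_perm p q a mm tt permutes {..<p * q}"
proof (rule inj_imp_permutes)
  have residues: "crt_perm p q a mm tt x < p * q"
      "crt_perm p q a mm tt x mod p = a * (x mod p) mod p"
      "crt_perm p q a mm tt x mod q = (mm (x mod p) * (x mod q) + tt (x mod p)) mod q"
    if "x < p * q" for x
  proof -
    have "0 < p" "0 < q" using that by (auto intro: Nat.gr0I)
    then show "crt_perm p q a mm tt x < p * q"
      "crt_perm p q a mm tt x mod p = a * (x mod p) mod p"
      "crt_perm p q a mm tt x mod q = (mm (x mod p) * (x mod q) + tt (x mod p)) mod q"
      using crt[OF pq] that unfolding crt_perm_def by simp_all
  qed
  show "inj_on (crt_perm p q a mm tt) {..<p * q}"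
  proof
    fix x y assume x: "x \<in> {..<p * q}" and y: "y \<in> {..<p * q}"
      and eq: "crt_perm p q a mm tt x = crt_perm p q a mm tt y"
    have "[a * (x mod p) = a * (y mod p)] (mod p)"
      using residues(2)[of x] residues(2)[of y] x y eq by (simp add: cong_def)
    then have xp: "x mod p = y mod p"
      using cong_mult_lcancel_nat[OF a] by (simp add: cong_def)
    have "[mm (x mod p) * (x mod q) + tt (x mod p) = mm (x mod p) * (y mod q) + tt (x mod p)]
        (mod q)"
      using residues(3)[of x] residues(3)[of y] x y eq xp by (simp add: cong_def)
    then have "[mm (x mod p) * (x mod q) = mm (x mod p) * (y mod q)] (mod q)"
      by (simp add: cong_add_rcancel_nat)
    then have "x mod q = y mod q" using cong_mult_lcancel_nat[OF mm] by (simp add: cong_def)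
    then show "x = y" using crt_unique[OF pq] x y xp by simp
  qed
  show "crt_perm p q a mm tt x \<in> {..<p * q}" if "x \<in> {..<p * q}" for x using residues(1) that
    by simp
  show "crt_perm p q a mm tt x = x" if "x \<notin> {..<p * q}" for x
    using that unfolding crt_perm_def by simp
qed simp

lemma shiftp_crt_perm_residues:
  fixes p q a b x :: nat and mm tt :: "nat \<Rightarrow> nat"
  defines "\<sigma> \<equiv> shiftp (p * q) (crt_perm p q a mm tt) b"
  assumes pq: "coprime p q" and x: "x < p * q"
  shows "\<sigma> x < p * q" "\<sigma> x mod p = shiftp p (mult_perm p a) b (x mod p)"
    "\<sigma> x mod q = fiber_step q b mm tt ((x mod p + b) mod p) (x mod q)"
proof -
  define z where "z = (x + b) mod (p * q)"
  have "0 < p" "0 < q" using x by (auto intro: Nat.gr0I)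
  then have z: "z < p * q" unfolding z_def by simp
  have zp: "z mod p = (x mod p + b) mod p" and zq: "z mod q = (x mod q + b) mod q"
    unfolding z_def by (simp_all add: mod_mod_cancel mod_add_left_eq)
  have "\<sigma> x = crt_perm p q a mm tt z" unfolding \<sigma>_def shiftp_def z_def using x by simp
  also have "\<dots> = crt p q (a * (z mod p) mod p) ((mm (z mod p) * (z mod q) + tt (z mod p)) mod q)"
    unfolding crt_perm_def using z by simp
  finally show "\<sigma> x < p * q" "\<sigma> x mod p = shiftp p (mult_perm p a) b (x mod p)"
    "\<sigma> x mod q = fiber_step q b mm tt ((x mod p + b) mod p) (x mod q)"
    using crt[OF pq] \<open>0 < p\<close> \<open>0 < q\<close> unfolding fiber_step_def shiftp_def mult_perm_def zp zq
      by simp_all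
qed

lemma affine_mod_fiber_step:
  assumes "0 < q"
  shows "affine_mod q (fiber_step q b mm tt u) (int (mm u)) (int (mm u) * int b + int (tt u))"
  unfolding affine_mod_def
proof (intro allI impI conjI)
  fix y
  show "fiber_step q b mm tt u y < q" unfolding fiber_step_def using assms by simp
  have "(mm u * ((y + b) mod q) + tt u) mod q = ((mm u * ((y + b) mod q)) mod q + tt u) mod q"
    by (simp add: mod_add_left_eq)
  also have "(mm u * ((y + b) mod q)) mod q = (mm u * (y + b)) mod q"
    by (simp add: mod_mult_right_eq)
  also have "((mm u * (y + b)) mod q + tt u) mod q = (mm u * (y + b) + tt u) mod q"
    by (simp add: mod_add_left_eq)
  finally have "[fiber_step q b mm tt u y = mm u * (y + b) + tt u] (mod q)"
    unfolding fiber_step_def cong_def by simp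
  then show "[int (fiber_step q b mm tt u y)
      = int (mm u) * int y + (int (mm u) * int b + int (tt u))] (mod int q)"
    by (simp add: cong_int_iff[symmetric] algebra_simps)
qed

lemma affine_mod_fiber_walk:
  assumes "0 < q"
  shows "affine_mod q (fiber_walk q b mm tt U k) (\<Prod>l<k. int (mm (U l)))
    (\<Sum>l<k. (\<Prod>j\<in>{l<..<k}. int (mm (U j))) * (int (mm (U l)) * int b + int (tt (U l))))"
proof (induction k)
  case 0
  show ?case using affine_mod_id[of q] by (simp add: id_def)
next
  case (Suc k)
  define M where "M l = int (mm (U l))" for l
  define d where "d l = int (mm (U l)) * int b + int (tt (U l))" for l
  have "affine_mod q (fiber_step q b mm tt (U k) \<circ> fiber_walk q b mm tt U k) (M k * (\<Prod>l<k. M l))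
      (M k * (\<Sum>l<k. (\<Prod>j\<in>{l<..<k}. M j) * d l) + d k)"
    unfolding M_def d_def by (rule affine_mod_comp[OF affine_mod_fiber_step[OF assms] Suc.IH])
  moreover have "M k * (\<Sum>l<k. (\<Prod>j\<in>{l<..<k}. M j) * d l) + d k
      = (\<Sum>l<Suc k. (\<Prod>j\<in>{l<..<Suc k}. M j) * d l)"
  proof -
    have "{l<..<Suc k} = insert k {l<..<k}" if "l < k" for l using that by auto
    then have "(\<Prod>j\<in>{l<..<Suc k}. M j) = M k * (\<Prod>j\<in>{l<..<k}. M j)" if "l < k" for l
      using that by simp
    moreover have "{k<..<Suc k} = {}" by auto
    ultimately show ?thesis by (simp add: sum_distrib_left mult.assoc)
  qed
  moreover have "M k * (\<Prod>l<k. M l) = (\<Prod>l<Suc k. M l)" by (simp add: mult.commute)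
  ultimately have "affine_mod q (fiber_walk q b mm tt U (Suc k)) (\<Prod>l<Suc k. M l)
      (\<Sum>l<Suc k. (\<Prod>j\<in>{l<..<Suc k}. M j) * d l)" by (simp only: fiber_walk.simps(2))
  then show ?case unfolding M_def d_def .
qed

lemma shiftp_crt_perm_funpow:
  fixes p q a b x :: nat and mm tt :: "nat \<Rightarrow> nat"
  defines "\<sigma> \<equiv> shiftp (p * q) (crt_perm p q a mm tt) b" and "\<tau> \<equiv> shiftp p (mult_perm p a) b"
  assumes pq: "coprime p q" and x: "x < p * q"
  shows "(\<sigma> ^^ k) x < p * q \<and> (\<sigma> ^^ k) x mod p = (\<tau> ^^ k) (x mod p) \<and>
    (\<sigma> ^^ k) x mod q = fiber_walk q b mm tt (\<lambda>l. ((\<tau> ^^ l) (x mod p) + b) mod p) k (x mod q)"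
proof (induction k)
  case (Suc k)
  then show ?case
    using shiftp_crt_perm_residues[OF pq, of "(\<sigma> ^^ k) x" a mm tt b] unfolding \<sigma>_def \<tau>_def by simp
qed (use x in simp)

lemma shiftp_mult_perm_primroot_orbit:
  fixes p a b x0 :: nat
  defines "\<tau> \<equiv> shiftp p (mult_perm p a) b" and "x1 \<equiv> (x0 + 1) mod p"
  assumes p: "prime p" and a: "residue_primroot p a" and x0: "x0 < p" "\<tau> x0 = x0"
  shows "(\<tau> ^^ l) x1 = (x0 + a ^ l) mod p"
    and "(\<tau> ^^ (p - 1)) x1 = x1"
    and "meets_orbits \<tau> {..<p} {x0, x1}"
proof -
  have "0 < p" using x0(1) by simp
  have \<tau>: "affine_mod p \<tau> (int a) (int a * int b)"
    unfolding \<tau>_def by (rule affine_mod_shiftp_mult_perm[OF \<open>0 < p\<close>])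
  have reach: "(\<tau> ^^ k) x1 = x" if "x < p" "[int a ^ k = int x - int x0] (mod int p)" for x k
    using affine_mod_funpow_eq_shift[OF \<tau> affine_mod_fixed_pointD[OF \<tau> x0] that(1), of k 1] that(2)
    unfolding x1_def by simp
  show orbit: "(\<tau> ^^ l) x1 = (x0 + a ^ l) mod p" for l
    using reach[of "(x0 + a ^ l) mod p" l] cong_sym[OF cong_mod_add_diff[of x0 "a ^ l" p]] \<open>0 < p\<close>
      by simp
  have "[a ^ (p - 1) = 1] (mod p)"
    using fermat_theorem[OF p] prime_not_dvd_primroot_pow[OF p a, of 1] by simp
  then have "(x0 + a ^ (p - 1)) mod p = (x0 + 1) mod p" unfolding cong_def
    by (metis mod_add_right_eq)
  then show "(\<tau> ^^ (p - 1)) x1 = x1" using orbit[of "p - 1"] by (simp add: x1_def)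
  have "coprime a p" using a by (simp add: residue_primroot_def coprime_commute)
  then have "\<tau> permutes {..<p}" unfolding \<tau>_def by (intro shiftp_permutes mult_perm_permutes)
  then show "meets_orbits \<tau> {..<p} {x0, x1}"
  proof (rule meets_orbits_if_generates[OF _ finite_lessThan])
    fix x assume "x \<in> {..<p}"
    then have x: "x < p" by simp
    show "\<exists>r\<in>{x0, x1}. \<exists>k. (\<tau> ^^ k) r = x"
    proof (cases "x = x0")
      case False
      then have "\<not> int p dvd (int x - int x0)"
        using cong_int_less_imp_eq[of x x0 p] x x0(1) by (auto simp: cong_iff_dvd_diff)
      then obtain k where "[int a ^ k = int x - int x0] (mod int p)"
        using prime_primroot_log[OF p a] by blast
      then show ?thesis using reach[OF x] by blast
    qed (intro bexI[of _ x0] exI[of _ 0]; simp)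
  qed
qed

lemma bij_betw_primroot_affine:
  assumes p: "prime p" and a: "residue_primroot p a" and s: "\<not> p dvd s"
  shows "bij_betw (\<lambda>j. (a ^ j * s + w) mod p) {..<p - 1} ({..<p} - {w mod p})"
proof -
  define h where "h j = (a ^ j * s + w) mod p" for j
  have "0 < p" using p prime_gt_0_nat by blast
  have cs: "coprime s p" using prime_imp_coprime[OF p s] by (simp add: coprime_commute)
  have inj: "inj_on h {..<p - 1}"
  proof
    fix i j assume ij: "i \<in> {..<p - 1}" "j \<in> {..<p - 1}" "h i = h j"
    then have "[a ^ i * s + w = a ^ j * s + w] (mod p)" unfolding h_def cong_def by simp
    then have "[a ^ i * s = a ^ j * s] (mod p)" by (simp add: cong_add_rcancel_nat)
    then have "[a ^ i = a ^ j] (mod p)" using cong_mult_rcancel_nat[OF cs] by blast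
    then have "[i = j] (mod (p - 1))" using primroot_pow_cong_iff[OF p a] by blast
    then show "i = j" using ij by (simp add: cong_def)
  qed
  have "h ` {..<p - 1} \<subseteq> {..<p} - {w mod p}"
  proof
    fix u assume "u \<in> h ` {..<p - 1}"
    then obtain l where l: "u = h l" by auto
    have "u \<noteq> w mod p"
    proof
      assume "u = w mod p"
      then have "[a ^ l * s + w = 0 + w] (mod p)" unfolding l h_def cong_def by simp
      then have "[a ^ l * s = 0] (mod p)" by (rule cong_add_rcancel_nat[THEN iffD1])
      then have "p dvd a ^ l * s" by (simp add: cong_0_iff)
      then show False using s prime_not_dvd_primroot_pow[OF p a] prime_dvd_mult_iff[OF p] by blast
    qed
    then show "u \<in> {..<p} - {w mod p}" unfolding l h_def using \<open>0 < p\<close> by simp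
  qed
  moreover have "card (h ` {..<p - 1}) = card ({..<p} - {w mod p})"
    using card_image[OF inj] \<open>0 < p\<close> by simp
  ultimately have "h ` {..<p - 1} = {..<p} - {w mod p}" by (intro card_subset_eq) auto
  then show ?thesis using inj unfolding bij_betw_def h_def by simp
qed

lemma sum_primroot_affine:
  fixes f :: "nat \<Rightarrow> 'b::comm_monoid_add"
  assumes p: "prime p" and a: "residue_primroot p a" and s: "\<not> p dvd s"
  shows "(\<Sum>j<p - 1. f ((a ^ j * s + w) mod p)) + f (w mod p) = (\<Sum>u<p. f u)"
proof -
  have "(\<Sum>j<p - 1. f ((a ^ j * s + w) mod p)) = (\<Sum>u\<in>{..<p} - {w mod p}. f u)"
    by (rule sum.reindex_bij_betw[OF bij_betw_primroot_affine[OF p a s]])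
  moreover have "w mod p \<in> {..<p}" using p prime_gt_0_nat by simp
  ultimately show ?thesis by (simp add: sum.remove[of "{..<p}" "w mod p"] add.commute)
qed

lemma card_crt_fibre_le:
  fixes p q r :: nat and R :: "nat set"
  assumes "coprime p q" "finite R"
  shows "card {x. x < p * q \<and> x mod p = r \<and> x mod q \<in> R} \<le> card R"
proof (rule card_inj_on_le)
  show "inj_on (\<lambda>x. x mod q) {x. x < p * q \<and> x mod p = r \<and> x mod q \<in> R}"
    using crt_unique[OF assms(1)] by (auto intro: inj_onI)
qed (use assms(2) in auto)

text \<open>Every cycle of the shifted skew product runs through the fibre over the fixed point \<open>x0\<close> of
  the base, where it follows one fibre map, or through the fibre over \<open>x0 + 1\<close>, to which it
  returns after the \<open>p - 1\<close> steps of the other base cycle.\<close>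

lemma cyc_shiftp_crt_perm_le:
  fixes p q a b x0 :: nat and mm tt :: "nat \<Rightarrow> nat" and R1 R2 :: "nat set"
  defines "\<sigma> \<equiv> shiftp (p * q) (crt_perm p q a mm tt) b"
  assumes p: "prime p" and q: "prime q" "p \<noteq> q" and a: "residue_primroot p a"
    and mm: "\<And>u. coprime (mm u) q"
    and x0: "x0 < p" "shiftp p (mult_perm p a) b x0 = x0"
    and R1: "finite R1" "meets_orbits (fiber_step q b mm tt ((x0 + b) mod p)) {..<q} R1"
    and R2: "finite R2"
      "meets_orbits (fiber_walk q b mm tt (\<lambda>l. (a ^ l + (x0 + b)) mod p) (p - 1)) {..<q} R2"
  shows "cyc (p * q) \<sigma> \<le> card R1 + card R2"
proof -
  define N where "N = p * q"
  define \<tau> where "\<tau> = shiftp p (mult_perm p a) b"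
  define x1 where "x1 = (x0 + 1) mod p"
  define F where "F r = {x. x < N \<and> x mod p = r}" for r
  define H where "H r = {x \<in> F r. x mod q \<in> (if r = x0 then R1 else R2)}" for r
  note orbit = shiftp_mult_perm_primroot_orbit[OF p a x0, folded \<tau>_def x1_def]
  have "1 < p" "1 < q" using prime_gt_1_nat p q(1) by blast+
  then have "0 < p" "0 < q" by simp_all
  have "x1 \<noteq> x0"
  proof (cases "x0 + 1 < p")
    case False
    then have "x0 + 1 = p" using x0(1) by simp
    then show ?thesis unfolding x1_def using \<open>1 < p\<close> by auto
  qed (simp add: x1_def)
  have pq: "coprime p q" using p q by (simp add: primes_coprime)
  have \<sigma>: "\<sigma> permutes {..<N}" unfolding \<sigma>_def N_def
    using a pq mm
      by (intro shiftp_permutes crt_perm_permutes)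
        (simp_all add: residue_primroot_def coprime_commute)
  have step: "\<sigma> x < N \<and> \<sigma> x mod p = \<tau> (x mod p) \<and>
      \<sigma> x mod q = fiber_step q b mm tt ((x mod p + b) mod p) (x mod q)" if "x < N" for x
    using shiftp_crt_perm_residues[OF pq that[unfolded N_def], of a mm tt b]
    unfolding \<sigma>_def \<tau>_def N_def by simp
  have walk: "(\<sigma> ^^ k) x < N \<and> (\<sigma> ^^ k) x mod p = (\<tau> ^^ k) (x mod p) \<and>
      (\<sigma> ^^ k) x mod q = fiber_walk q b mm tt (\<lambda>l. ((\<tau> ^^ l) (x mod p) + b) mod p) k (x mod q)"
    if "x < N" for x k
    unfolding \<sigma>_def \<tau>_def N_def by (rule shiftp_crt_perm_funpow[OF pq that[unfolded N_def]])
  have "meets_orbits \<sigma> {..<N} {x \<in> {..<N}. x mod p \<in> {x0, x1}}"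
    by (rule meets_orbits_semiconj[OF _ _ _ orbit(3)]) (use step \<open>0 < p\<close> in auto)
  moreover have "{x \<in> {..<N}. x mod p \<in> {x0, x1}} = (\<Union>r\<in>{x0, x1}. F r)" unfolding F_def by auto
  ultimately have base: "meets_orbits \<sigma> {..<N} (\<Union>r\<in>{x0, x1}. F r)" by simp
  have "meets_orbits \<sigma> (F x0) {x \<in> F x0. x mod q \<in> R1}"
    using step x0(2) \<open>0 < q\<close> unfolding F_def \<tau>_def
    by (intro meets_orbits_semiconj[OF _ _ _ R1(2)]) auto
  moreover have "meets_orbits (\<sigma> ^^ (p - 1)) (F x1) {x \<in> F x1. x mod q \<in> R2}"
  proof (rule meets_orbits_semiconj[OF _ _ _ R2(2)])
    have "((\<tau> ^^ l) x1 + b) mod p = (a ^ l + (x0 + b)) mod p" for l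
    proof -
      have "((\<tau> ^^ l) x1 + b) mod p = (x0 + a ^ l + b) mod p" unfolding orbit(1)
        by (rule mod_add_left_eq)
      then show ?thesis by (simp add: ac_simps)
    qed
    then show "(\<sigma> ^^ (p - 1)) x \<in> F x1"
      "(\<sigma> ^^ (p - 1)) x mod q
        = fiber_walk q b mm tt (\<lambda>l. (a ^ l + (x0 + b)) mod p) (p - 1) (x mod q)"
      if "x \<in> F x1" for x
      using walk[of x "p - 1"] orbit(2) that unfolding F_def by auto
  qed (use \<open>0 < q\<close> in auto)
  ultimately have "meets_orbits \<sigma> (F r) (H r)" if "r \<in> {x0, x1}" for r
    using that \<open>x1 \<noteq> x0\<close> unfolding H_def by (auto intro: meets_orbits_funpowD)
  then have "meets_orbits \<sigma> {..<N} (\<Union>r\<in>{x0, x1}. H r)" by (rule meets_orbits_UN[OF base])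
  then have "cyc N \<sigma> \<le> card (H x0 \<union> H x1)"
    by (intro cyc_le_card_if_meets_orbits[OF \<sigma>]) (auto simp: H_def F_def)
  also have "\<dots> \<le> card (H x0) + card (H x1)" by (rule card_Un_le)
  also have "\<dots> \<le> card R1 + card R2"
    using card_crt_fibre_le[OF pq R1(1), of x0] card_crt_fibre_le[OF pq R2(1), of x1] \<open>x1 \<noteq> x0\<close>
    unfolding H_def F_def N_def by (simp add: conj_assoc)
  finally show ?thesis unfolding N_def .
qed

lemma primroot_shiftp_fixed_point:
  assumes "prime p" "2 < p" "residue_primroot p a"
  shows "\<exists>x0<p. shiftp p (mult_perm p a) b x0 = x0"
proof (rule shiftp_mult_perm_fixed_point)
  show "coprime (int a - 1) (int p)"
    using coprime_primroot_pow_minus_1[OF assms(1,3), of 1] assms(2) by simp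
qed (use assms(2) in simp)

lemma weights_sum_cong_3:
  fixes k p :: nat
  assumes "0 < k" "k \<le> p" "3 \<le> p"
  shows "\<exists>e. (\<forall>u. e u = 1 \<or> e u = 2) \<and> [(\<Sum>u<p. e u) = 3] (mod k)"
proof -
  define n where "n = k - (p - 3) mod k"
  define e where "e u = (if u < n then 2 else 1 :: nat)" for u
  have "n \<le> p" unfolding n_def using assms(2) by linarith
  have "(\<Sum>u<p. e u) = (\<Sum>u<n. 2) + (\<Sum>u\<in>{n..<p}. 1)"
    using sum.atLeastLessThan_concat[of 0 n p e] \<open>n \<le> p\<close>
    by (simp add: lessThan_atLeast0 e_def)
  also have "\<dots> = p + n" using \<open>n \<le> p\<close> by simp
  also have "\<dots> = 3 + k * Suc ((p - 3) div k)"
  proof -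
    have "k * ((p - 3) div k) + (p - 3) mod k = p - 3" by (rule mult_div_mod_eq)
    moreover have "(p - 3) mod k < k" using assms(1) by simp
    ultimately show ?thesis unfolding n_def mult_Suc_right using assms(3) by linarith
  qed
  finally have "[(\<Sum>u<p. e u) = 3] (mod k)" unfolding cong_def by (simp only: mod_mult_self2)
  moreover have "\<forall>u. e u = 1 \<or> e u = 2" unfolding e_def by simp
  ultimately show ?thesis by blast
qed

lemma sum_primroot_translates_cong:
  fixes e :: "nat \<Rightarrow> nat"
  assumes p: "prime p" and a: "residue_primroot p a" and e: "[(\<Sum>u<p. e u) = t] (mod k)"
    and "e (w mod p) \<le> t"
  shows "[(\<Sum>l<p - 1. e ((a ^ l + w) mod p)) = t - e (w mod p)] (mod k)"
proof -
  have "\<not> p dvd 1" using prime_gt_1_nat[OF p] by simp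
  from sum_primroot_affine[OF p a this, of e w]
  have "[(\<Sum>l<p - 1. e ((a ^ l + w) mod p)) + e (w mod p) = (t - e (w mod p)) + e (w mod p)] (mod k)"
    using e assms(4) by simp
  then show ?thesis by (rule cong_add_rcancel_nat[THEN iffD1])
qed

text \<open>Multipliers \<open>g\<^sup>e\<^sup>u\<close> with \<open>e u \<in> {1, 2}\<close> and \<open>\<Sum>e \<equiv> 3 (mod q - 1)\<close>: the return maps to the two
  base fibres multiply by \<open>g\<^sup>e\<^sup>0\<close> and \<open>g\<^sup>3\<^sup>-\<^sup>e\<^sup>0\<close>, giving at most \<open>(e0 + 1) + (4 - e0)\<close> cycles.\<close>

lemma cyc_shiftp_crt_perm_weighted:
  fixes e :: "nat \<Rightarrow> nat"
  assumes p: "prime p" "2 < p" and q: "prime q" "5 \<le> q" "p \<noteq> q"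
    and a: "residue_primroot p a" and g: "residue_primroot q g"
    and e: "\<And>u. e u = 1 \<or> e u = 2" "[(\<Sum>u<p. e u) = 3] (mod (q - 1))"
  shows "cyc (p * q) (shiftp (p * q) (crt_perm p q a (\<lambda>u. g ^ e u) (\<lambda>_. 0)) b) \<le> 5"
proof -
  define mm where "mm u = g ^ e u" for u
  have "0 < q" using q(2) by simp
  obtain x0 where x0: "x0 < p" "shiftp p (mult_perm p a) b x0 = x0"
    using primroot_shiftp_fixed_point[OF p a] by blast
  define u0 where "u0 = (x0 + b) mod p"
  define U where "U = (\<lambda>l. (a ^ l + (x0 + b)) mod p)"
  have not_dvd: "\<not> (q - 1) dvd e'" if "e' = 1 \<or> e' = 2" for e'
    using that q(2) by (auto dest: dvd_imp_le)
  have "affine_mod q (fiber_step q b mm (\<lambda>_. 0) u0) (int g ^ e u0) (int (mm u0) * int b)"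
    using affine_mod_fiber_step[OF \<open>0 < q\<close>, of b mm "\<lambda>_. 0" u0] unfolding mm_def by simp
  moreover have "0 < e u0" using e(1)[of u0] by auto
  ultimately obtain R1 where R1: "finite R1" "card R1 \<le> e u0 + 1"
    "meets_orbits (fiber_step q b mm (\<lambda>_. 0) u0) {..<q} R1"
    using affine_mod_primroot_meets_orbits[OF q(1) g _ not_dvd[OF e(1)]] by blast
  have "[(\<Sum>l<p - 1. e (U l)) = 3 - e u0] (mod (q - 1))"
    unfolding U_def u0_def using e(1)[of "(x0 + b) mod p"]
    by (intro sum_primroot_translates_cong[OF p(1) a e(2)]) auto
  then have "[g ^ (\<Sum>l<p - 1. e (U l)) = g ^ (3 - e u0)] (mod q)"
    using primroot_pow_cong_iff[OF q(1) g] by blast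
  then have "[(\<Prod>l<p - 1. int (mm (U l))) = int g ^ (3 - e u0)] (mod int q)"
    unfolding mm_def using cong_int_iff[of "\<Prod>l<p - 1. g ^ e (U l)" "g ^ (3 - e u0)" q]
    by (simp add: power_sum)
  then obtain d where "affine_mod q (fiber_walk q b mm (\<lambda>_. 0) U (p - 1)) (int g ^ (3 - e u0)) d"
    using affine_mod_cong_multiplier[OF affine_mod_fiber_walk[OF \<open>0 < q\<close>]] by blast
  moreover have "0 < 3 - e u0" "3 - e u0 = 1 \<or> 3 - e u0 = 2" using e(1)[of u0] by auto
  ultimately obtain R2 where R2: "finite R2" "card R2 \<le> (3 - e u0) + 1"
    "meets_orbits (fiber_walk q b mm (\<lambda>_. 0) U (p - 1)) {..<q} R2"
    using affine_mod_primroot_meets_orbits[OF q(1) g _ not_dvd] by blast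
  have "cyc (p * q) (shiftp (p * q) (crt_perm p q a mm (\<lambda>_. 0)) b) \<le> card R1 + card R2"
    using cyc_shiftp_crt_perm_le[OF p(1) q(1,3) a _ x0 R1(1) _ R2(1)] R1(3) R2(3) g
    unfolding u0_def U_def mm_def by (simp add: residue_primroot_def coprime_commute)
  also have "\<dots> \<le> 5" using R1(2) R2(2) e(1)[of u0] by auto
  finally show ?thesis unfolding mm_def .
qed

lemma tmax_distinct_primes_5:
  assumes p: "prime p" and q: "prime q" "5 \<le> q" "q < p"
  shows "p * q - 5 \<le> tmax (p * q)"
proof -
  have "2 < p" using q by simp
  obtain a where a: "residue_primroot p a" using prime_primitive_root_exists[OF _ p] \<open>2 < p\<close> by auto
  obtain g where g: "residue_primroot q g" using prime_primitive_root_exists[OF _ q(1)] q(2) by auto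
  have "\<exists>e. (\<forall>u. e u = 1 \<or> e u = 2) \<and> [(\<Sum>u<p. e u) = 3] (mod (q - 1))"
    by (rule weights_sum_cong_3) (use q in linarith)+
  then obtain e where e: "\<forall>u. e u = 1 \<or> e u = 2" "[(\<Sum>u<p. e u) = 3] (mod (q - 1))" by blast
  have "crt_perm p q a (\<lambda>u. g ^ e u) (\<lambda>_. 0) permutes {..<p * q}"
    using a g p q by (intro crt_perm_permutes)
      (auto simp: residue_primroot_def coprime_commute primes_coprime)
  then show ?thesis
    by (rule tmax_lower_bound)
      (use cyc_shiftp_crt_perm_weighted[OF p \<open>2 < p\<close> q(1,2) _ a g] e q
        in \<open>auto simp: prime_gt_0_nat\<close>)
qed

definition dlog :: "nat \<Rightarrow> nat \<Rightarrow> nat \<Rightarrow> nat" where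
  "dlog p a z = inv_into {..<p - 1} (\<lambda>k. a ^ k mod p) (z mod p)"

text \<open>The multiplicative character of \<open>\<int>\<^sub>p\<^sup>*\<close> sending the primitive root \<open>a\<close> to the primitive root \<open>c\<close>
  of \<open>\<int>\<^sub>q\<^sup>*\<close>, extended by \<open>0\<close> at \<open>0\<close>; it is well defined when \<open>q - 1\<close> divides \<open>p - 1\<close>.\<close>

definition chi :: "nat \<Rightarrow> nat \<Rightarrow> nat \<Rightarrow> nat \<Rightarrow> nat \<Rightarrow> nat" where
  "chi p q a c z = (if p dvd z then 0 else c ^ dlog p a z mod q)"

locale prime_character =
  fixes p q a c :: nat
  assumes p: "prime p" and q: "prime q" and a: "residue_primroot p a" and c: "residue_primroot q c"
    and dvd: "(q - 1) dvd (p - 1)" and q2: "2 < q"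
begin

abbreviation \<chi> where "\<chi> \<equiv> chi p q a c"

lemma p_pos: "0 < p"
  using p prime_gt_0_nat by blast

lemma dlog:
  assumes "\<not> p dvd z"
  shows "dlog p a z < p - 1" "[a ^ dlog p a z = z] (mod p)"
proof -
  have "1 < p" using p prime_gt_1_nat by blast
  have "z mod p \<in> totatives p" using assms p_pos
    by (simp add: totatives_prime[OF p] dvd_eq_mod_eq_0)
  then have im: "z mod p \<in> (\<lambda>k. a ^ k mod p) ` {..<p - 1}"
    using residue_primroot_is_generator[OF \<open>1 < p\<close> a] totient_prime[OF p] unfolding bij_betw_def
      by simp
  show "dlog p a z < p - 1" unfolding dlog_def using inv_into_into[OF im] by simp
  show "[a ^ dlog p a z = z] (mod p)" unfolding dlog_def cong_def using f_inv_into_f[OF im] by simp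
qed

lemma chi_pow_cong:
  assumes "[a ^ i = z] (mod p)"
  shows "[\<chi> z = c ^ i] (mod q)"
proof -
  have nz: "\<not> p dvd z" using assms prime_not_dvd_primroot_pow[OF p a] cong_dvd_iff by blast
  have "[a ^ dlog p a z = a ^ i] (mod p)" using dlog(2)[OF nz] assms
    by (blast intro: cong_trans cong_sym)
  then have "[dlog p a z = i] (mod (p - 1))" using primroot_pow_cong_iff[OF p a] by blast
  then have "[dlog p a z = i] (mod (q - 1))" using cong_dvd_modulus_nat dvd by blast
  then have "[c ^ dlog p a z = c ^ i] (mod q)" using primroot_pow_cong_iff[OF q c] by blast
  then show ?thesis unfolding chi_def using nz by (simp add: cong_def)
qed

lemma chi_zero: "p dvd z \<Longrightarrow> \<chi> z = 0"
  unfolding chi_def by simp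

lemma chi_cong: "[z = z'] (mod p) \<Longrightarrow> \<chi> z = \<chi> z'"
  unfolding chi_def dlog_def cong_def by (simp add: dvd_eq_mod_eq_0)

lemma chi_mod: "\<chi> (z mod p) = \<chi> z"
  by (rule chi_cong) (simp add: cong_def)

lemma chi_mult_pow: "[\<chi> (a ^ k * s) = c ^ k * \<chi> s] (mod q)"
proof (cases "p dvd s")
  case False
  have i: "[a ^ dlog p a s = s] (mod p)" by (rule dlog(2)[OF False])
  then have "[a ^ (k + dlog p a s) = a ^ k * s] (mod p)" by (simp add: power_add cong_scalar_left)
  then have "[\<chi> (a ^ k * s) = c ^ (k + dlog p a s)] (mod q)" by (rule chi_pow_cong)
  then have "[\<chi> (a ^ k * s) = c ^ k * c ^ dlog p a s] (mod q)" by (simp add: power_add)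
  also have "[c ^ k * c ^ dlog p a s = c ^ k * \<chi> s] (mod q)"
    by (intro cong_mult cong_refl cong_sym[OF chi_pow_cong[OF i]])
  finally show ?thesis .
qed (simp add: chi_zero)

lemma chi_pow_not_dvd: "\<not> q dvd \<chi> (a ^ k)"
  using chi_pow_cong[OF cong_refl, of k] prime_not_dvd_primroot_pow[OF q c] cong_dvd_iff by blast

lemma geometric_sum_dvd: "int q dvd (\<Sum>j<p - 1. int c ^ j)"
proof -
  have "[c ^ (p - 1) = c ^ 0] (mod q)"
    using primroot_pow_cong_iff[OF q c, of "p - 1" 0] dvd by (simp add: cong_0_iff)
  then have "int q dvd (int c - 1) * (\<Sum>j<p - 1. int c ^ j)"
    using cong_int_iff[of "c ^ (p - 1)" 1 q] by (simp add: power_diff_1_eq cong_iff_dvd_diff)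
  moreover have "\<not> int q dvd (int c ^ 1 - 1)"
  proof
    assume dvd1: "int q dvd int c ^ 1 - 1"
    have "coprime (int c ^ 1 - 1) (int q)" using coprime_primroot_pow_minus_1[OF q c, of 1] q2
      by simp
    then have "is_unit (int q)" using coprime_common_divisor[OF _ dvd1 dvd_refl] by blast
    then show False using prime_gt_1_nat[OF q] by simp
  qed
  ultimately show ?thesis using q by (simp add: prime_dvd_mult_iff)
qed

end

context prime_character
begin

lemma chi_sum_dvd: "int q dvd (\<Sum>z<p. int (\<chi> z))"
proof -
  have "\<not> p dvd 1" using prime_gt_1_nat[OF p] by simp
  from sum_primroot_affine[OF p a this, of "\<lambda>z. int (\<chi> z)" 0]
  have "(\<Sum>z<p. int (\<chi> z)) = (\<Sum>j<p - 1. int (\<chi> (a ^ j mod p)))" by (simp add: chi_zero)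
  also have "[\<dots> = (\<Sum>j<p - 1. int c ^ j)] (mod int q)"
  proof (rule cong_sum)
    fix j
    have "[\<chi> (a ^ j mod p) = c ^ j] (mod q)" by (rule chi_pow_cong) (simp add: cong_def)
    then show "[int (\<chi> (a ^ j mod p)) = int c ^ j] (mod int q)" by (simp flip: cong_int_iff)
  qed
  finally show ?thesis using geometric_sum_dvd cong_dvd_iff by blast
qed

lemma chi_affine_sum_dvd:
  assumes "p dvd s"
  shows "(\<Sum>j<p - 1. int (\<chi> (a ^ j * s + w))) = int (p - 1) * int (\<chi> w)"
proof -
  have "\<chi> (a ^ j * s + w) = \<chi> w" for j
  proof (rule chi_cong)
    have "[a ^ j * s = 0] (mod p)" using assms by (simp add: cong_0_iff)
    then show "[a ^ j * s + w = w] (mod p)" using cong_add[OF _ cong_refl, of _ 0 p w] by simp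
  qed
  then show ?thesis by simp
qed

lemma chi_affine_sum_not_dvd:
  assumes "\<not> p dvd s"
  shows "[(\<Sum>j<p - 1. int (\<chi> (a ^ j * s + w))) = - int (\<chi> w)] (mod int q)"
proof -
  have "(\<Sum>j<p - 1. int (\<chi> (a ^ j * s + w))) + int (\<chi> w) = (\<Sum>z<p. int (\<chi> z))"
    using sum_primroot_affine[OF p a assms, of "\<lambda>z. int (\<chi> z)" w] by (simp add: chi_mod)
  then have "[(\<Sum>j<p - 1. int (\<chi> (a ^ j * s + w))) + int (\<chi> w) = 0] (mod int q)"
    using chi_sum_dvd by (simp add: cong_0_iff)
  then show ?thesis by (simp add: cong_iff_dvd_diff)
qed

text \<open>Multiplicativity turns the weights \<open>c\<^sup>p\<^sup>-\<^sup>2\<^sup>-\<^sup>l\<close> into the translations \<open>a\<^sup>p\<^sup>-\<^sup>2\<^sup>-\<^sup>l\<close> of the argument.\<close>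

lemma chi_weighted_sum:
  "[(\<Sum>l<p - 1. int c ^ (p - 2 - l) * int (\<chi> (a ^ l + s)))
     = (\<Sum>j<p - 1. int (\<chi> (a ^ j * s + a ^ (p - 2))))] (mod int q)"
proof -
  have "[(\<Sum>l<p - 1. int c ^ (p - 2 - l) * int (\<chi> (a ^ l + s)))
     = (\<Sum>l<p - 1. int (\<chi> (a ^ (p - 1 - Suc l) * s + a ^ (p - 2))))] (mod int q)"
  proof (rule cong_sum)
    fix l assume "l \<in> {..<p - 1}"
    then have "a ^ (p - 2 - l) * (a ^ l + s) = a ^ (p - 1 - Suc l) * s + a ^ (p - 2)"
      by (simp add: algebra_simps flip: power_add)
    then have "[c ^ (p - 2 - l) * \<chi> (a ^ l + s) = \<chi> (a ^ (p - 1 - Suc l) * s + a ^ (p - 2))]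
        (mod q)"
      using chi_mult_pow[of "p - 2 - l" "a ^ l + s"] by (simp add: cong_sym)
    then show "[int c ^ (p - 2 - l) * int (\<chi> (a ^ l + s))
        = int (\<chi> (a ^ (p - 1 - Suc l) * s + a ^ (p - 2)))] (mod int q)"
      by (simp flip: cong_int_iff)
  qed
  also have "(\<Sum>l<p - 1. int (\<chi> (a ^ (p - 1 - Suc l) * s + a ^ (p - 2))))
      = (\<Sum>j<p - 1. int (\<chi> (a ^ j * s + a ^ (p - 2))))"
    by (rule sum.nat_diff_reindex)
  finally show ?thesis .
qed

end

text \<open>The second term compensates for \<open>(p - 1) \<chi>(w)\<close> vanishing modulo \<open>q\<close> when \<open>q\<close> divides \<open>p - 1\<close>.\<close>

definition twisted_chi :: "nat \<Rightarrow> nat \<Rightarrow> nat \<Rightarrow> nat \<Rightarrow> nat \<Rightarrow> nat" where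
  "twisted_chi p q a c u = chi p q a c u + (if q dvd (p - 1) then chi p q a c (u + (p - 1)) else 0)"

context prime_character
begin

lemma twisted_chi_cong:
  assumes "[u = u'] (mod p)"
  shows "twisted_chi p q a c u = twisted_chi p q a c u'"
proof -
  have "[u + (p - 1) = u' + (p - 1)] (mod p)" using assms by (intro cong_add cong_refl)
  then show ?thesis unfolding twisted_chi_def using chi_cong[OF assms] chi_cong by presburger
qed

lemma chi_affine_sum_cong:
  "[(\<Sum>j<p - 1. int (\<chi> (a ^ j * s + w)))
     = (if p dvd s then int (p - 1) * int (\<chi> w) else - int (\<chi> w))] (mod int q)"
  using chi_affine_sum_dvd[of s w] chi_affine_sum_not_dvd[of s w] by (cases "p dvd s") simp_all

lemma twisted_sum_cong:
  defines "F \<equiv> \<lambda>s. \<Sum>j<p - 1. int (\<chi> (a ^ j * s + a ^ (p - 2)))"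
  shows "[(\<Sum>l<p - 1. int c ^ (p - 2 - l) * (int c * int b + int (twisted_chi p q a c (a ^ l + u))))
    = F u + (if q dvd (p - 1) then F (u + (p - 1)) else 0)] (mod int q)"
proof -
  define S0 where "S0 = (\<Sum>l<p - 1. int c ^ (p - 2 - l))"
  define W where "W s = (\<Sum>l<p - 1. int c ^ (p - 2 - l) * int (\<chi> (a ^ l + s)))" for s
  have "S0 = (\<Sum>l<p - 1. int c ^ (p - 1 - Suc l))" unfolding S0_def by simp
  also have "\<dots> = (\<Sum>j<p - 1. int c ^ j)" by (rule sum.nat_diff_reindex)
  finally have S0: "[int c * int b * S0 = 0] (mod int q)"
    using geometric_sum_dvd by (simp add: cong_0_iff)
  have W: "[W s = F s] (mod int q)" for s unfolding W_def F_def by (rule chi_weighted_sum)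
  have "(\<Sum>l<p - 1. int c ^ (p - 2 - l) * (int c * int b + int (twisted_chi p q a c (a ^ l + u))))
      = int c * int b * S0 + W u + (if q dvd (p - 1) then W (u + (p - 1)) else 0)"
    unfolding S0_def W_def twisted_chi_def
    by (simp add: sum.distrib sum_distrib_left algebra_simps)
  also have "[\<dots> = 0 + F u + (if q dvd (p - 1) then F (u + (p - 1)) else 0)] (mod int q)"
    by (intro cong_add S0 W) (simp add: W)
  finally show ?thesis by simp
qed

lemma prime_not_dvd_both_shift:
  assumes "prime p"
  shows "\<not> (p dvd u \<and> p dvd u + (p - 1))"
proof
  assume "p dvd u \<and> p dvd u + (p - 1)"
  then have "p dvd p - 1" using dvd_add_right_iff[of p u "p - 1"] by blast
  moreover have "0 < p - 1" using prime_gt_1_nat[OF assms] by simp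
  ultimately have "p \<le> p - 1" by (rule dvd_imp_le)
  then show False using prime_gt_1_nat[OF assms] by simp
qed

lemma not_dvd_pair_of_affine_sums:
  fixes C :: int
  defines "A \<equiv> \<lambda>s. if p dvd s then int (p - 1) * C else - C"
  assumes "q dvd (p - 1)" "\<not> int q dvd C"
  shows "\<not> int q dvd A u + A (u + (p - 1))"
proof -
  have qC: "int q dvd int (p - 1) * C" using assms(2) by simp
  note not_both = prime_not_dvd_both_shift[OF p, of u]
  consider "p dvd u" | "p dvd u + (p - 1)" | "\<not> p dvd u" "\<not> p dvd u + (p - 1)" by blast
  then show ?thesis
  proof cases
    case 1
    then have "A u + A (u + (p - 1)) = int (p - 1) * C + - C" using not_both unfolding A_def by simp
    moreover have "int q dvd int (p - 1) * C + - C \<longleftrightarrow> int q dvd - C"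
      by (rule dvd_add_right_iff[OF qC])
    ultimately show ?thesis using assms(3) by simp
  next
    case 2
    then have "A u + A (u + (p - 1)) = - C + int (p - 1) * C" using not_both unfolding A_def by simp
    moreover have "int q dvd - C + int (p - 1) * C \<longleftrightarrow> int q dvd - C"
      by (rule dvd_add_left_iff[OF qC])
    ultimately show ?thesis using assms(3) by simp
  next
    case 3
    then have "A u + A (u + (p - 1)) = - (2 * C)" unfolding A_def by simp
    moreover have "prime (int q)" using q by simp
    then have "\<not> int q dvd 2 * C"
      using assms(3) q2 prime_dvd_mult_iff[of "int q" 2 C] by (auto dest: zdvd_imp_le)
    ultimately show ?thesis by simp
  qed
qed

lemma twisted_translation_not_dvd:
  "\<not> int q dvd
    (\<Sum>l<p - 1. int c ^ (p - 2 - l) * (int c * int b + int (twisted_chi p q a c (a ^ l + u))))"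
  (is "\<not> int q dvd ?D")
proof -
  define C where "C = int (\<chi> (a ^ (p - 2)))"
  define A where "A s = (if p dvd s then int (p - 1) * C else - C)" for s
  define F where "F s = (\<Sum>j<p - 1. int (\<chi> (a ^ j * s + a ^ (p - 2))))" for s
  have "\<not> int q dvd C" unfolding C_def using chi_pow_not_dvd by simp
  have F: "[F s = A s] (mod int q)" for s unfolding F_def C_def A_def by (rule chi_affine_sum_cong)
  have D: "[?D = F u + (if q dvd (p - 1) then F (u + (p - 1)) else 0)] (mod int q)"
    unfolding F_def by (rule twisted_sum_cong)
  show ?thesis
  proof (cases "q dvd (p - 1)")
    case False
    have "prime (int q)" using q by simp
    then have "\<not> int q dvd A u" unfolding A_def
      using False \<open>\<not> int q dvd C\<close> prime_dvd_mult_iff[of "int q" "int (p - 1)" C] by simp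
    moreover have "[?D = A u] (mod int q)" using cong_trans[OF _ F] D False by simp
    ultimately show ?thesis using cong_dvd_iff by blast
  next
    case True
    have "\<not> int q dvd A u + A (u + (p - 1))"
      unfolding A_def by (rule not_dvd_pair_of_affine_sums[OF True \<open>\<not> int q dvd C\<close>])
    moreover have "[?D = A u + A (u + (p - 1))] (mod int q)"
      using cong_trans[OF _ cong_add[OF F F]] D True by simp
    ultimately show ?thesis using cong_dvd_iff by blast
  qed
qed

end

lemma (in prime_character) cyc_shiftp_crt_perm_twisted:
  assumes "p \<noteq> q"
  shows "cyc (p * q) (shiftp (p * q) (crt_perm p q a (\<lambda>_. c) (twisted_chi p q a c)) b) \<le> 3"
proof -
  define T where "T = twisted_chi p q a c"
  have "1 < p" "1 < q" using prime_gt_1_nat p q by blast+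
  then have "0 < q" by simp
  have "q - 1 \<le> p - 1" using dvd \<open>1 < p\<close> by (intro dvd_imp_le) auto
  then have "2 < p" using assms q2 by linarith
  obtain x0 where x0: "x0 < p" "shiftp p (mult_perm p a) b x0 = x0"
    using primroot_shiftp_fixed_point[OF p \<open>2 < p\<close> a] by blast
  define u0 where "u0 = (x0 + b) mod p"
  define U where "U = (\<lambda>l. (a ^ l + (x0 + b)) mod p)"
  have step: "affine_mod q (fiber_step q b (\<lambda>_. c) T u0) (int c ^ 1) (int c * int b + int (T u0))"
    using affine_mod_fiber_step[OF \<open>0 < q\<close>, of b "\<lambda>_. c" T u0] by simp
  have "\<not> (q - 1) dvd 1" using q2 by simp
  then obtain R1 where R1: "finite R1" "card R1 \<le> 1 + 1"
    "meets_orbits (fiber_step q b (\<lambda>_. c) T u0) {..<q} R1"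
    using affine_mod_primroot_meets_orbits[OF q c zero_less_one _ step] by blast
  define D where "D = (\<Sum>l<p - 1. int c ^ (p - 2 - l) * (int c * int b + int (T (a ^ l + u0))))"
  have "affine_mod q (fiber_walk q b (\<lambda>_. c) T U (p - 1)) (int c ^ (p - 1)) D"
  proof -
    have "T (U l) = T (a ^ l + u0)" for l
      unfolding T_def U_def u0_def by (rule twisted_chi_cong) (simp add: cong_def mod_add_right_eq)
    moreover have "(\<Prod>j\<in>{l<..<p - 1}. int c) = int c ^ (p - 2 - l)" for l by simp
    ultimately show ?thesis
      using affine_mod_fiber_walk[OF \<open>0 < q\<close>, of b "\<lambda>_. c" T U "p - 1"] unfolding D_def by simp
  qed
  moreover have "[int c ^ (p - 1) = 1] (mod int q)"
    using primroot_pow_cong_iff[OF q c, of "p - 1" 0] dvd cong_int_iff[of "c ^ (p - 1)" 1 q]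
    by (simp add: cong_0_iff)
  ultimately have "affine_mod q (fiber_walk q b (\<lambda>_. c) T U (p - 1)) 1 D"
    by (rule affine_mod_cong_multiplier)
  moreover have "\<not> int q dvd D" unfolding D_def T_def by (rule twisted_translation_not_dvd)
  ultimately have R2: "meets_orbits (fiber_walk q b (\<lambda>_. c) T U (p - 1)) {..<q} {0}"
    using affine_mod_translation_meets_orbits[OF q] by blast
  have "cyc (p * q) (shiftp (p * q) (crt_perm p q a (\<lambda>_. c) T) b) \<le> card R1 + card {0::nat}"
    using cyc_shiftp_crt_perm_le[OF p q assms a _ x0 R1(1) _ _ R2[unfolded U_def]] R1(3) c
    unfolding u0_def by (simp add: residue_primroot_def coprime_commute)
  also have "\<dots> \<le> 3" using R1(2) by simp
  finally show ?thesis unfolding T_def .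
qed

lemma tmax_distinct_primes_3:
  assumes p: "prime p" and q: "prime q" "2 < q" "p \<noteq> q" and dvd: "(q - 1) dvd (p - 1)"
  shows "p * q - 3 \<le> tmax (p * q)"
proof -
  have "1 < p" using prime_gt_1_nat[OF p] .
  obtain a where a: "residue_primroot p a" using prime_primitive_root_exists[OF \<open>1 < p\<close> p] by blast
  obtain c where c: "residue_primroot q c" using prime_primitive_root_exists[OF _ q(1)] q(2) by auto
  interpret prime_character p q a c by unfold_locales (use p q a c dvd in auto)
  have "crt_perm p q a (\<lambda>_. c) (twisted_chi p q a c) permutes {..<p * q}"
    using a c primes_coprime[OF assms(1,2,4)]
      by (intro crt_perm_permutes) (auto simp: residue_primroot_def coprime_commute)
  then show ?thesis
    by (rule tmax_lower_bound)
      (use cyc_shiftp_crt_perm_twisted[OF assms(4)] \<open>1 < p\<close> assms(3) in auto)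
qed

lemma tmax_primes_3:
  assumes p: "prime p" "3 \<le> p" and q: "prime q" "3 \<le> q" and dvd: "(q - 1) dvd (p - 1)"
  shows "p * q - 3 \<le> tmax (p * q)"
proof (cases "p = q")
  case True
  then show ?thesis using tmax_prime_square[OF p(1)] p(2) by simp
next
  case False
  then show ?thesis using tmax_distinct_primes_3[OF p(1) q(1) _ _ dvd] q(2) by simp
qed

lemma tmax_primes_5:
  assumes p: "prime p" "3 \<le> p" and q: "prime q" "3 \<le> q"
  shows "p * q - 5 \<le> tmax (p * q)"
proof (cases "(q - 1) dvd (p - 1)")
  case True
  then show ?thesis using tmax_primes_3[OF p q] by linarith
next
  case q_not_dvd: False
  show ?thesis
  proof (cases "(p - 1) dvd (q - 1)")
    case True
    then show ?thesis using tmax_primes_3[OF q p] by (simp add: mult.commute)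
  next
    case p_not_dvd: False
    have "odd p" "odd q" using p q prime_odd_nat by auto
    have "q \<noteq> 3"
    proof
      assume "q = 3"
      then have "(q - 1) dvd (p - 1)" using \<open>odd p\<close> by presburger
      then show False using q_not_dvd by simp
    qed
    then have "5 \<le> q" using q(2) \<open>odd q\<close> by presburger
    have "p \<noteq> 3"
    proof
      assume "p = 3"
      then have "(p - 1) dvd (q - 1)" using \<open>odd q\<close> by presburger
      then show False using p_not_dvd by simp
    qed
    then have "5 \<le> p" using p(2) \<open>odd p\<close> by presburger
    have "p \<noteq> q" using q_not_dvd by auto
    then consider "q < p" | "p < q" by linarith
    then show ?thesis
    proof cases
      case 1
      then show ?thesis using tmax_distinct_primes_5[OF p(1) q(1) \<open>5 \<le> q\<close>] by simp
    next
      case 2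
      then show ?thesis using tmax_distinct_primes_5[OF q(1) p(1) \<open>5 \<le> p\<close>]
        by (simp add: mult.commute)
    qed
  qed
qed

theorem theorem1p4:
  shows "(\<forall>n m :: nat. n \<ge> 2 \<longrightarrow> m \<ge> 2 \<longrightarrow> tmax (n * m) \<ge> n * tmax m + tmax n)
    \<and> (\<forall>p q :: nat. prime p \<longrightarrow> prime q \<longrightarrow> p \<ge> 3 \<longrightarrow> q \<ge> 3 \<longrightarrow>
          int (tmax (p * q)) \<ge> int (p * q) - 5
        \<and> ((q - 1) dvd (p - 1) \<longrightarrow> int (tmax (p * q)) \<ge> int (p * q) - 3))"
proof (intro conjI allI impI)
  fix n m :: nat
  assume "n \<ge> 2" "m \<ge> 2"
  then show "tmax (n * m) \<ge> n * tmax m + tmax n" by (intro tmax_mult_lower_bound) simp_all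
next
  fix p q :: nat
  assume "prime p" "prime q" "p \<ge> 3" "q \<ge> 3"
  then have "p * q - 5 \<le> tmax (p * q)" by (intro tmax_primes_5)
  then show "int (tmax (p * q)) \<ge> int (p * q) - 5" by linarith
  assume "(q - 1) dvd (p - 1)"
  then have "p * q - 3 \<le> tmax (p * q)"
    using tmax_primes_3 \<open>prime p\<close> \<open>prime q\<close> \<open>p \<ge> 3\<close> \<open>q \<ge> 3\<close> by blast
  then show "int (tmax (p * q)) \<ge> int (p * q) - 3" by linarith
qed

end
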